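(* Let $S_1\subseteq S_2$ be strongly $E^*$-unitary inverse semigroups with zero with $S_1\subseteq_cS_2$, let $\varphi:S_2\setminus\{0\}\to G$ be a grading, and let $E_{k,g}$, $\phi_{k,g}$ and the induced partial actions of $G$ on $\mathcal T_c(E_k)$ be as in the context. Suppose that for all $x,y\in E_1$ and $s\in S_2$ there exists $s'\in S_1$ with $xsy\le s'$. Then for all $g\in G$, $x,y\in E_1$ and $a\in E_{2,g^{-1}}$ there exists $Z\in\mathcal T_c(E_{1,g})$ with $V_x\cap\tilde\phi_{2,g}(V_y\cap V_a)\le Z$.
   Context: For an inverse semigroup $S$ with zero, $E$ is its semilattice of idempotents; the natural order on $S$ is $x\le y\iff x=ey$ for some $e\in E$. $S$ is strongly $E^*$-unitary via $\varphi:S\setminus\{0\}\to G$ if $\varphi^{-1}(1_G)=E\setminus\{0\}$ and $\varphi(ab)=\varphi(a)\varphi(b)$ whenever $ab\ne0$; a grading on $S_2$ restricts to one on $S_1$. For a semilattice $P$ with $0$: a cover of $x$ is a finite $\{x_i\}$ with $x_i\le x$ meeting nontrivially every nonzero $y\le x$; tight filters contain a member of each cover of each of their elements; $V_x$ is the set of tight filters containing $x$, and $\mathcal T_c(P)$ is the generalized Boolean algebra of compact open subsets of the tight spectrum. $S_1\subseteq_cS_2$ means $S_1$ is an inverse subsemigroup and every cover in $E_1$ is a cover in $E_2$; then $V^{E_1}_x\mapsto V^{E_2}_x$ identifies $\mathcal T_c(E_1)\subseteq\mathcal T_c(E_2)$. For $k=1,2$: $E_{k,g}=\{x\in E_k:x\le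 ss^*\text{ for some }s\in S_k,\ \varphi(s)=g\}$, $\phi_{k,g}(x)=sxs^*$ for $x\in E_{k,g^{-1}}$ (any $s\in S_k$ with $\varphi(s)=g$, $x\le s^*s$); $\mathcal T_c(E_{k,g})$ denotes the ideal of $\mathcal T_c(E_k)$ generated by $\{V_x:x\in E_{k,g}\}$, and $\tilde\phi_{k,g}:\mathcal T_c(E_{k,g^{-1}})\to\mathcal T_c(E_{k,g})$ is the isomorphism generated by $V_x\mapsto V_{\phi_{k,g}(x)}$. *)

theory Defs
  imports "HOL-Analysis.Analysis"
begin

definition inverse_semigroup_zero :: "'a set \<Rightarrow> ('a \<Rightarrow> 'a \<Rightarrow> 'a) \<Rightarrow> 'a \<Rightarrow> bool" where
  "inverse_semigroup_zero S m z \<longleftrightarrow>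
     (\<forall>a\<in>S. \<forall>b\<in>S. m a b \<in> S) \<and>
     (\<forall>a\<in>S. \<forall>b\<in>S. \<forall>c\<in>S. m (m a b) c = m a (m b c)) \<and>
     z \<in> S \<and> (\<forall>a\<in>S. m z a = z \<and> m a z = z) \<and>
     (\<forall>a\<in>S. \<exists>!b. b \<in> S \<and> m (m a b) a = a \<and> m (m b a) b = b)"

definition sinv :: "'a set \<Rightarrow> ('a \<Rightarrow> 'a \<Rightarrow> 'a) \<Rightarrow> 'a \<Rightarrow> 'a" where
  "sinv S m a = (THE b. b \<in> S \<and> m (m a b) a = a \<and> m (m b a) b = b)"

definition idem :: "'a set \<Rightarrow> ('a \<Rightarrow> 'a \<Rightarrow> 'a) \<Rightarrow> 'a set" where
  "idem S m = {e \<in> S. m e e = e}"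

definition nle :: "'a set \<Rightarrow> ('a \<Rightarrow> 'a \<Rightarrow> 'a) \<Rightarrow> 'a \<Rightarrow> 'a \<Rightarrow> bool" where
  "nle S m x y \<longleftrightarrow> (\<exists>e\<in>idem S m. x = m e y)"

definition inverse_subsemigroup :: "'a set \<Rightarrow> 'a set \<Rightarrow> ('a \<Rightarrow> 'a \<Rightarrow> 'a) \<Rightarrow> 'a \<Rightarrow> bool" where
  "inverse_subsemigroup S1 S m z \<longleftrightarrow> S1 \<subseteq> S \<and> z \<in> S1 \<and>
     (\<forall>a\<in>S1. \<forall>b\<in>S1. m a b \<in> S1) \<and> (\<forall>a\<in>S1. sinv S m a \<in> S1)"

text \<open>Grading phi : S \ {0} -> G witnessing strong E*-unitarity (G written additively).\<close>
definition grading :: "'a set \<Rightarrow> ('a \<Rightarrow> 'a \<Rightarrow> 'a) \<Rightarrow> 'a \<Rightarrow> ('a \<Rightarrow> 'g::group_add) \<Rightarrow> bool" where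
  "grading S m z \<phi> \<longleftrightarrow>
     {s \<in> S. s \<noteq> z \<and> \<phi> s = 0} = idem S m - {z} \<and>
     (\<forall>a\<in>S. \<forall>b\<in>S. m a b \<noteq> z \<longrightarrow> \<phi> (m a b) = \<phi> a + \<phi> b)"

definition strongly_E_unitary :: "'a set \<Rightarrow> ('a \<Rightarrow> 'a \<Rightarrow> 'a) \<Rightarrow> 'a \<Rightarrow> ('a \<Rightarrow> 'g::group_add) \<Rightarrow> bool" where
  "strongly_E_unitary S m z \<phi> \<longleftrightarrow> inverse_semigroup_zero S m z \<and> grading S m z \<phi>"

definition sle :: "('a \<Rightarrow> 'a \<Rightarrow> 'a) \<Rightarrow> 'a \<Rightarrow> 'a \<Rightarrow> bool" where
  "sle m x y \<longleftrightarrow> m x y = x"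

definition is_cover :: "'a set \<Rightarrow> ('a \<Rightarrow> 'a \<Rightarrow> 'a) \<Rightarrow> 'a \<Rightarrow> 'a \<Rightarrow> 'a set \<Rightarrow> bool" where
  "is_cover P m z x C \<longleftrightarrow> finite C \<and> C \<subseteq> P \<and> (\<forall>c\<in>C. sle m c x) \<and>
     (\<forall>y\<in>P. y \<noteq> z \<and> sle m y x \<longrightarrow> (\<exists>c\<in>C. m c y \<noteq> z))"

definition is_filter :: "'a set \<Rightarrow> ('a \<Rightarrow> 'a \<Rightarrow> 'a) \<Rightarrow> 'a \<Rightarrow> 'a set \<Rightarrow> bool" where
  "is_filter P m z F \<longleftrightarrow> F \<subseteq> P \<and> F \<noteq> {} \<and> z \<notin> F \<and>
     (\<forall>x\<in>F. \<forall>y\<in>P. sle m x y \<longrightarrow> y \<in> F) \<and> (\<forall>x\<in>F. \<forall>y\<in>F. m x y \<in> F)"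

definition tight_filter :: "'a set \<Rightarrow> ('a \<Rightarrow> 'a \<Rightarrow> 'a) \<Rightarrow> 'a \<Rightarrow> 'a set \<Rightarrow> bool" where
  "tight_filter P m z F \<longleftrightarrow> is_filter P m z F \<and>
     (\<forall>x\<in>F. \<forall>C. is_cover P m z x C \<longrightarrow> C \<inter> F \<noteq> {})"

definition tight_spec :: "'a set \<Rightarrow> ('a \<Rightarrow> 'a \<Rightarrow> 'a) \<Rightarrow> 'a \<Rightarrow> 'a set set" where
  "tight_spec P m z = {F. tight_filter P m z F}"

definition Vset :: "'a set \<Rightarrow> ('a \<Rightarrow> 'a \<Rightarrow> 'a) \<Rightarrow> 'a \<Rightarrow> 'a \<Rightarrow> 'a set set" where
  "Vset P m z x = {F \<in> tight_spec P m z. x \<in> F}"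

text \<open>Topology of the tight spectrum: subspace of the product topology on {0,1}^P,
  i.e. generated by the subbasic sets {F. x \<in> F} and {F. x \<notin> F}, x \<in> P.\<close>
definition tight_top :: "'a set \<Rightarrow> ('a \<Rightarrow> 'a \<Rightarrow> 'a) \<Rightarrow> 'a \<Rightarrow> 'a set topology" where
  "tight_top P m z = topology_generated_by
     ({{F \<in> tight_spec P m z. x \<in> F} | x. x \<in> P} \<union> {{F \<in> tight_spec P m z. x \<notin> F} | x. x \<in> P})"

definition Tc :: "'a set \<Rightarrow> ('a \<Rightarrow> 'a \<Rightarrow> 'a) \<Rightarrow> 'a \<Rightarrow> 'a set set set" where
  "Tc P m z = {U. openin (tight_top P m z) U \<and> compactin (tight_top P m z) U}"

definition gba_ideal :: "'b set set \<Rightarrow> 'b set set \<Rightarrow> bool" where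
  "gba_ideal T I \<longleftrightarrow> I \<subseteq> T \<and> {} \<in> I \<and> (\<forall>U\<in>I. \<forall>W\<in>I. U \<union> W \<in> I) \<and>
     (\<forall>U\<in>I. \<forall>W\<in>T. W \<subseteq> U \<longrightarrow> W \<in> I)"

definition ideal_gen :: "'b set set \<Rightarrow> 'b set set \<Rightarrow> 'b set set" where
  "ideal_gen T B = \<Inter>{I. gba_ideal T I \<and> B \<subseteq> I}"

definition gba_hom :: "'b set set \<Rightarrow> ('b set \<Rightarrow> 'c set) \<Rightarrow> bool" where
  "gba_hom D h \<longleftrightarrow> (\<forall>U\<in>D. \<forall>W\<in>D. h (U \<union> W) = h U \<union> h W \<and> h (U \<inter> W) = h U \<inter> h W \<and>
     h (U - W) = h U - h W)"

definition Ekg :: "'a set \<Rightarrow> ('a \<Rightarrow> 'a \<Rightarrow> 'a) \<Rightarrow> 'a \<Rightarrow> ('a \<Rightarrow> 'g::group_add) \<Rightarrow> 'g \<Rightarrow> 'a set" where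
  "Ekg S m z \<phi> g = {x \<in> idem S m. \<exists>s\<in>S. s \<noteq> z \<and> \<phi> s = g \<and> nle S m x (m s (sinv S m s))}"

definition phikg :: "'a set \<Rightarrow> ('a \<Rightarrow> 'a \<Rightarrow> 'a) \<Rightarrow> 'a \<Rightarrow> ('a \<Rightarrow> 'g::group_add) \<Rightarrow> 'g \<Rightarrow> 'a \<Rightarrow> 'a" where
  "phikg S m z \<phi> g x =
     (let s = (SOME s. s \<in> S \<and> s \<noteq> z \<and> \<phi> s = g \<and> nle S m x (m (sinv S m s) s))
      in m (m s x) (sinv S m s))"

definition TcE :: "'a set \<Rightarrow> ('a \<Rightarrow> 'a \<Rightarrow> 'a) \<Rightarrow> 'a \<Rightarrow> ('a \<Rightarrow> 'g::group_add) \<Rightarrow> 'g \<Rightarrow> 'a set set set" where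
  "TcE S m z \<phi> g = ideal_gen (Tc (idem S m) m z) {Vset (idem S m) m z x | x. x \<in> Ekg S m z \<phi> g}"

definition phit :: "'a set \<Rightarrow> ('a \<Rightarrow> 'a \<Rightarrow> 'a) \<Rightarrow> 'a \<Rightarrow> ('a \<Rightarrow> 'g::group_add) \<Rightarrow> 'g \<Rightarrow> 'a set set \<Rightarrow> 'a set set" where
  "phit S m z \<phi> g = (THE h. bij_betw h (TcE S m z \<phi> (-g)) (TcE S m z \<phi> g) \<and>
       gba_hom (TcE S m z \<phi> (-g)) h \<and>
       (\<forall>x\<in>Ekg S m z \<phi> (-g). h (Vset (idem S m) m z x) = Vset (idem S m) m z (phikg S m z \<phi> g x)) \<and>
       (\<forall>U. U \<notin> TcE S m z \<phi> (-g) \<longrightarrow> h U = {}))"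

definition cover_sub :: "'a set \<Rightarrow> 'a set \<Rightarrow> ('a \<Rightarrow> 'a \<Rightarrow> 'a) \<Rightarrow> 'a \<Rightarrow> bool" where
  "cover_sub S1 S2 m z \<longleftrightarrow> inverse_subsemigroup S1 S2 m z \<and>
     (\<forall>x\<in>idem S1 m. \<forall>C. is_cover (idem S1 m) m z x C \<longrightarrow> is_cover (idem S2 m) m z x C)"

definition iota :: "'a set \<Rightarrow> 'a set \<Rightarrow> ('a \<Rightarrow> 'a \<Rightarrow> 'a) \<Rightarrow> 'a \<Rightarrow> 'a set set \<Rightarrow> 'a set set" where
  "iota S1 S2 m z = (THE h. inj_on h (Tc (idem S1 m) m z) \<and>
       h ` Tc (idem S1 m) m z \<subseteq> Tc (idem S2 m) m z \<and>
       gba_hom (Tc (idem S1 m) m z) h \<and>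
       (\<forall>x\<in>idem S1 m. h (Vset (idem S1 m) m z x) = Vset (idem S2 m) m z x) \<and>
       (\<forall>U. U \<notin> Tc (idem S1 m) m z \<longrightarrow> h U = {}))"

end

theory Submission
  imports Defs
begin

text \<open>
  Every compact open subset of the tight spectrum of a semilattice is a finite union of sets
  V x - (V y1 \<union> ... \<union> V yn): the V x are compact (continuous images of closed subsets of a Cantor
  cube) and clopen, and the spectrum is Hausdorff. Hence a Boolean homomorphism defined on compact
  open sets is determined by its values on the V x. This identifies the embedding iota with
  U \<mapsto> {F. F \<inter> E1 \<in> U} (restriction preserves tightness because covers in E1 stay covers in E2, and
  every tight filter of E1 is such a restriction by compactness), and the partial action of g with
  the map induced by transporting tight filters along phi_g.

  Consequently V x \<inter> phi~_g (V y \<inter> V a) = V p with p = x t (y a) t* for some t of degree g. If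
  p \<noteq> 0, the hypothesis gives s' in S1 above w = x t y; then s' has degree g, and p = w a t* lies
  below x s' s'*, which belongs to E1,g. So Z = V (x s' s'*) works, and Z = {} if p = 0.
\<close>

section \<open>Semilattices with zero and their tight filters\<close>

locale zero_semilattice =
  fixes P :: "'a set" and m :: "'a \<Rightarrow> 'a \<Rightarrow> 'a" and z :: 'a
  assumes closed: "a \<in> P \<Longrightarrow> b \<in> P \<Longrightarrow> m a b \<in> P"
    and commute: "a \<in> P \<Longrightarrow> b \<in> P \<Longrightarrow> m a b = m b a"
    and assoc: "a \<in> P \<Longrightarrow> b \<in> P \<Longrightarrow> c \<in> P \<Longrightarrow> m (m a b) c = m a (m b c)"
    and idem: "a \<in> P \<Longrightarrow> m a a = a"
    and zero_in: "z \<in> P"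
    and zero_left: "a \<in> P \<Longrightarrow> m z a = z"
begin

abbreviation "V \<equiv> Vset P m z"
abbreviation "spec \<equiv> tight_spec P m z"
abbreviation "T \<equiv> tight_top P m z"

lemma zero_right: "a \<in> P \<Longrightarrow> m a z = z"
  using commute zero_left zero_in by metis

lemma meet_sle1: "a \<in> P \<Longrightarrow> b \<in> P \<Longrightarrow> sle m (m a b) a"
  unfolding sle_def by (metis assoc commute idem)

lemma meet_sle2: "a \<in> P \<Longrightarrow> b \<in> P \<Longrightarrow> sle m (m a b) b"
  unfolding sle_def by (metis assoc idem)

lemma sle_trans: "a \<in> P \<Longrightarrow> b \<in> P \<Longrightarrow> c \<in> P \<Longrightarrow> sle m a b \<Longrightarrow> sle m b c \<Longrightarrow> sle m a c"
  unfolding sle_def by (metis assoc)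

lemma sle_antisym: "a \<in> P \<Longrightarrow> b \<in> P \<Longrightarrow> sle m a b \<Longrightarrow> sle m b a \<Longrightarrow> a = b"
  unfolding sle_def by (metis commute)

lemma sle_refl: "a \<in> P \<Longrightarrow> sle m a a"
  unfolding sle_def by (simp add: idem)

lemma zero_sle: "a \<in> P \<Longrightarrow> sle m z a"
  unfolding sle_def by (simp add: zero_left)

lemma sle_zero_iff: "a \<in> P \<Longrightarrow> sle m a z \<longleftrightarrow> a = z"
  unfolding sle_def by (auto simp: zero_right)

lemma sle_meetI: "a \<in> P \<Longrightarrow> b \<in> P \<Longrightarrow> c \<in> P \<Longrightarrow> sle m c a \<Longrightarrow> sle m c b \<Longrightarrow> sle m c (m a b)"
  unfolding sle_def by (metis assoc)

lemma meet_mono: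
  "a \<in> P \<Longrightarrow> b \<in> P \<Longrightarrow> c \<in> P \<Longrightarrow> d \<in> P \<Longrightarrow> sle m a b \<Longrightarrow> sle m c d \<Longrightarrow> sle m (m a c) (m b d)"
  by (meson closed sle_meetI meet_sle1 meet_sle2 sle_trans)

lemma up_filter:
  assumes "w \<in> P" "w \<noteq> z"
  shows "is_filter P m z {y \<in> P. sle m w y}"
  unfolding is_filter_def using assms
  by (auto intro: sle_refl sle_meetI closed dest: sle_trans simp: sle_zero_iff)

lemma is_filter_D:
  assumes "is_filter P m z F"
  shows "F \<subseteq> P" "F \<noteq> {}" "z \<notin> F"
    "\<And>x y. x \<in> F \<Longrightarrow> y \<in> P \<Longrightarrow> sle m x y \<Longrightarrow> y \<in> F"
    "\<And>x y. x \<in> F \<Longrightarrow> y \<in> F \<Longrightarrow> m x y \<in> F"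
  using assms unfolding is_filter_def by blast+

lemma spec_D:
  assumes "F \<in> spec"
  shows "F \<subseteq> P" "z \<notin> F" "F \<noteq> {}"
    "\<And>x y. x \<in> F \<Longrightarrow> y \<in> P \<Longrightarrow> sle m x y \<Longrightarrow> y \<in> F"
    "\<And>x y. x \<in> F \<Longrightarrow> y \<in> F \<Longrightarrow> m x y \<in> F"
    "\<And>x C. x \<in> F \<Longrightarrow> is_cover P m z x C \<Longrightarrow> C \<inter> F \<noteq> {}"
  using assms unfolding tight_spec_def tight_filter_def is_filter_def by blast+

lemma spec_meet_iff: "F \<in> spec \<Longrightarrow> a \<in> P \<Longrightarrow> b \<in> P \<Longrightarrow> m a b \<in> F \<longleftrightarrow> a \<in> F \<and> b \<in> F"
  by (meson closed meet_sle1 meet_sle2 spec_D(4,5))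

lemma V_Int: "a \<in> P \<Longrightarrow> b \<in> P \<Longrightarrow> V a \<inter> V b = V (m a b)"
  unfolding Vset_def using spec_meet_iff by blast

lemma V_zero: "V z = {}"
  unfolding Vset_def using spec_D(2) by blast

lemma V_mono: "a \<in> P \<Longrightarrow> b \<in> P \<Longrightarrow> sle m a b \<Longrightarrow> V a \<subseteq> V b"
  unfolding Vset_def using spec_D(4) by blast

end

context zero_semilattice
begin

definition maximal_filter :: "'a set \<Rightarrow> bool" where
  "maximal_filter M \<longleftrightarrow> is_filter P m z M \<and> (\<forall>F. is_filter P m z F \<and> M \<subseteq> F \<longrightarrow> F = M)"

lemma is_filter_Union_chain:
  assumes filt: "\<And>F. F \<in> C \<Longrightarrow> is_filter P m z F"
    and chain: "\<And>F G. F \<in> C \<Longrightarrow> G \<in> C \<Longrightarrow> F \<subseteq> G \<or> G \<subseteq> F" and "C \<noteq> {}"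
  shows "is_filter P m z (\<Union>C)"
  unfolding is_filter_def
proof (intro conjI ballI impI)
  show "\<Union>C \<subseteq> P" "\<Union>C \<noteq> {}" "z \<notin> \<Union>C"
    using filt \<open>C \<noteq> {}\<close> unfolding is_filter_def by blast+
next
  fix a b assume "a \<in> \<Union>C" "b \<in> P" "sle m a b"
  then show "b \<in> \<Union>C"
    using filt unfolding is_filter_def by blast
next
  fix a b assume "a \<in> \<Union>C" "b \<in> \<Union>C"
  then obtain F G where "F \<in> C" "G \<in> C" "a \<in> F" "b \<in> G" by blast
  then show "m a b \<in> \<Union>C"
    using chain[of F G] filt unfolding is_filter_def by blast
qed

lemma maximal_filter_exists:
  assumes "w \<in> P" "w \<noteq> z"
  shows "\<exists>M. maximal_filter M \<and> w \<in> M"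
proof -
  let ?A = "{F. is_filter P m z F \<and> w \<in> F}"
  have "\<exists>M\<in>?A. \<forall>F\<in>?A. M \<subseteq> F \<longrightarrow> F = M"
  proof (rule Zorn_Lemma2, intro ballI)
    fix C assume C: "C \<in> chains ?A"
    show "\<exists>U\<in>?A. \<forall>F\<in>C. F \<subseteq> U"
    proof (cases "C = {}")
      case True
      have "{y \<in> P. sle m w y} \<in> ?A"
        using up_filter[OF assms] sle_refl[OF assms(1)] assms(1) by blast
      then show ?thesis
        using True by blast
    next
      case False
      have "C \<subseteq> ?A"
        using C by (rule chainsD2)
      then have "\<Union>C \<in> ?A"
        using is_filter_Union_chain[of C] chainsD[OF C] False by blast
      then show ?thesis
        by blast
    qed
  qed
  then show ?thesis
    unfolding maximal_filter_def by blast
qed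

lemma is_filter_adjoin:
  assumes M: "is_filter P m z M" and y: "y \<in> P" and nz: "\<forall>u\<in>M. m u y \<noteq> z"
  shows "is_filter P m z {v \<in> P. \<exists>u\<in>M. sle m (m u y) v}" (is "is_filter P m z ?G")
  unfolding is_filter_def
proof (intro conjI ballI impI)
  have MP: "M \<subseteq> P" "M \<noteq> {}"
    using is_filter_D[OF M] by blast+
  show "?G \<subseteq> P" by blast
  show "?G \<noteq> {}"
    using MP y closed meet_sle2 by blast
  show "z \<notin> ?G"
  proof
    assume "z \<in> ?G"
    then obtain u where "u \<in> M" "sle m (m u y) z"
      by blast
    moreover from this have "m u y \<in> P"
      using MP y closed by blast
    ultimately show False
      using nz sle_zero_iff by blast
  qed
next
  fix a b assume "a \<in> ?G" "b \<in> P" "sle m a b"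
  moreover from this obtain u where "u \<in> M" "sle m (m u y) a" "a \<in> P"
    by blast
  moreover from this have "m u y \<in> P"
    using is_filter_D(1)[OF M] y closed by blast
  ultimately show "b \<in> ?G"
    using sle_trans[of "m u y" a b] by blast
next
  fix a b assume "a \<in> ?G" "b \<in> ?G"
  then obtain u1 u2 where u: "u1 \<in> M" "u2 \<in> M" "sle m (m u1 y) a" "sle m (m u2 y) b" "a \<in> P" "b \<in> P"
    by blast
  have P: "u1 \<in> P" "u2 \<in> P"
    using u is_filter_D(1)[OF M] by auto
  then have P': "m u1 u2 \<in> P" "m u1 y \<in> P" "m u2 y \<in> P" "m (m u1 u2) y \<in> P"
    using y closed by blast+
  have "sle m (m (m u1 u2) y) (m u1 y)" "sle m (m (m u1 u2) y) (m u2 y)"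
    using meet_mono[OF P'(1) _ y y _ sle_refl[OF y]] P meet_sle1 meet_sle2 by blast+
  then have "sle m (m (m u1 u2) y) a" "sle m (m (m u1 u2) y) b"
    using sle_trans[OF P'(4) P'(2) u(5) _ u(3)] sle_trans[OF P'(4) P'(3) u(6) _ u(4)] by blast+
  then have "sle m (m (m u1 u2) y) (m a b)"
    using sle_meetI[OF u(5,6) P'(4)] by blast
  moreover have "m u1 u2 \<in> M"
    using is_filter_D(5)[OF M u(1,2)] .
  ultimately show "m a b \<in> ?G"
    using u closed by blast
qed

lemma maximal_filter_orthogonal:
  assumes M: "maximal_filter M" and y: "y \<in> P" "y \<notin> M"
  shows "\<exists>u\<in>M. m u y = z"
proof (rule ccontr)
  assume "\<not> (\<exists>u\<in>M. m u y = z)"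
  moreover have Mf: "is_filter P m z M"
    using M unfolding maximal_filter_def by blast
  ultimately have "is_filter P m z {v \<in> P. \<exists>u\<in>M. sle m (m u y) v}"
    using is_filter_adjoin[OF Mf y(1)] by blast
  moreover have "M \<subseteq> {v \<in> P. \<exists>u\<in>M. sle m (m u y) v}" "y \<in> {v \<in> P. \<exists>u\<in>M. sle m (m u y) v}"
    using is_filter_D(1,2)[OF Mf] meet_sle1 meet_sle2 y(1) by blast+
  ultimately show False
    using M y(2) unfolding maximal_filter_def by blast
qed

lemma maximal_filter_orthogonal_finite:
  assumes M: "maximal_filter M"
  shows "finite C \<Longrightarrow> C \<subseteq> P - M \<Longrightarrow> \<exists>u\<in>M. \<forall>c\<in>C. m u c = z"
proof (induction rule: finite_induct)
  case empty
  then show ?case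
    using M is_filter_D(2) unfolding maximal_filter_def by blast
next
  case (insert c C)
  obtain u where u: "u \<in> M" "\<forall>c\<in>C. m u c = z"
    using insert by blast
  obtain uc where uc: "uc \<in> M" "m uc c = z"
    using maximal_filter_orthogonal[OF M] insert.prems by blast
  have Mf: "is_filter P m z M"
    using M unfolding maximal_filter_def by blast
  then have MP: "M \<subseteq> P" and "m u uc \<in> M"
    using is_filter_D(1,5) u(1) uc(1) by blast+
  moreover have "m (m u uc) c' = z" if "c' \<in> insert c C" for c'
  proof -
    have P: "u \<in> P" "uc \<in> P" "c' \<in> P"
      using u(1) uc(1) MP that insert.prems by auto
    then have "m (m u uc) c' = m u (m uc c')" "m (m u uc) c' = m uc (m u c')"
      using assoc[of u uc c'] assoc[of uc u c'] commute[of u uc] by simp_all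
    moreover have "c' = c \<or> c' \<in> C"
      using that by blast
    ultimately show ?thesis
      using u(2) uc(2) zero_right[OF P(1)] zero_right[OF P(2)] by auto
  qed
  ultimately show ?case by blast
qed

lemma maximal_filter_tight:
  assumes M: "maximal_filter M"
  shows "tight_filter P m z M"
  unfolding tight_filter_def
proof (intro conjI ballI allI impI)
  show Mf: "is_filter P m z M"
    using M unfolding maximal_filter_def by blast
  fix x C assume x: "x \<in> M" and C: "is_cover P m z x C"
  show "C \<inter> M \<noteq> {}"
  proof
    assume "C \<inter> M = {}"
    moreover have CP: "finite C" "C \<subseteq> P"
      using C unfolding is_cover_def by blast+
    ultimately obtain u where u: "u \<in> M" "\<forall>c\<in>C. m u c = z"
      using maximal_filter_orthogonal_finite[OF M] by blast
    have P: "u \<in> P" "x \<in> P"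
      using u(1) x is_filter_D(1)[OF Mf] by blast+
    have "m u x \<in> M"
      using is_filter_D(5)[OF Mf u(1) x] .
    then have "m u x \<noteq> z" "m u x \<in> P" "sle m (m u x) x"
      using is_filter_D(3)[OF Mf] closed[OF P] meet_sle2[OF P] by auto
    then obtain c where c: "c \<in> C" "m c (m u x) \<noteq> z"
      using C unfolding is_cover_def by blast
    have "m c (m u x) = m (m u c) x"
      using assoc[of c u x] commute[of c u] P c CP by auto
    then show False
      using c u(2) zero_left[OF P(2)] by simp
  qed
qed

lemma exists_tight_filter: "w \<in> P \<Longrightarrow> w \<noteq> z \<Longrightarrow> \<exists>F\<in>spec. w \<in> F"
  using maximal_filter_exists maximal_filter_tight unfolding tight_spec_def by blast

lemma spec_lower_bound:
  assumes F: "F \<in> spec" and "x0 \<in> F"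
  shows "finite X \<Longrightarrow> X \<subseteq> F \<Longrightarrow> \<exists>x\<in>F. sle m x x0 \<and> (\<forall>x'\<in>X. sle m x x')"
proof (induction rule: finite_induct)
  case empty
  then show ?case using assms spec_D(1) sle_refl by blast
next
  case (insert a X)
  then obtain x where x: "x \<in> F" "sle m x x0" "\<forall>x'\<in>X. sle m x x'" by blast
  have P: "x \<in> P" "a \<in> P" "x0 \<in> P"
    using x(1) insert.prems \<open>x0 \<in> F\<close> spec_D(1)[OF F] by auto
  then have P': "m x a \<in> P"
    using closed by blast
  have "m x a \<in> F"
    using spec_D(5)[OF F x(1)] insert.prems by blast
  moreover have "sle m (m x a) x0" "\<forall>x'\<in>X. sle m (m x a) x'"
    using x insert.prems spec_D(1)[OF F] sle_trans[OF P' P(1)] meet_sle1[OF P(1,2)] P(3) by blast+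
  moreover have "sle m (m x a) a"
    using meet_sle2[OF P(1,2)] .
  ultimately show ?case by blast
qed

text \<open>Tightness of G: the meets of x with finitely many non-members of G do not cover x.\<close>

lemma spec_exclusion_witness:
  assumes G: "G \<in> spec" and x: "x \<in> G" and Y: "finite Y" "Y \<subseteq> P - G"
  shows "\<exists>w\<in>P. w \<noteq> z \<and> sle m w x \<and> (\<forall>y\<in>Y. m (m x y) w = z)"
proof -
  have xP: "x \<in> P"
    using x spec_D(1)[OF G] by blast
  have "\<not> is_cover P m z x (m x ` Y)"
  proof
    assume "is_cover P m z x (m x ` Y)"
    then obtain y where "y \<in> Y" "m x y \<in> G"
      using spec_D(6)[OF G x] by blast
    then show False
      using spec_meet_iff[OF G xP] Y(2) by blast
  qed
  moreover have "finite (m x ` Y)" "m x ` Y \<subseteq> P" "\<forall>c\<in>m x ` Y. sle m c x"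
    using Y xP closed meet_sle1 by auto
  ultimately show ?thesis
    unfolding is_cover_def by blast
qed

end


section \<open>The topology of the tight spectrum\<close>

context zero_semilattice
begin

lemma Union_tight_subbasis:
  "\<Union>({{F \<in> spec. x \<in> F} | x. x \<in> P} \<union> {{F \<in> spec. x \<notin> F} | x. x \<in> P}) = spec"
  using zero_in by blast

lemma topspace_tight_top: "topspace T = spec"
  unfolding tight_top_def topology_generated_by_topspace Union_tight_subbasis ..

lemma openin_V: "x \<in> P \<Longrightarrow> openin T (V x)"
  unfolding tight_top_def Vset_def by (rule topology_generated_by_Basis) blast

lemma openin_not_V: "x \<in> P \<Longrightarrow> openin T {F \<in> spec. x \<notin> F}"
  unfolding tight_top_def by (rule topology_generated_by_Basis) blast

lemma closedin_V:
  assumes "x \<in> P"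
  shows "closedin T (V x)"
proof -
  have "topspace T - V x = {F \<in> spec. x \<notin> F}"
    unfolding topspace_tight_top Vset_def by blast
  then show ?thesis
    using openin_not_V[OF assms] unfolding closedin_def topspace_tight_top Vset_def by auto
qed

lemma closedin_not_V:
  assumes "x \<in> P"
  shows "closedin T {F \<in> spec. x \<notin> F}"
proof -
  have "topspace T - {F \<in> spec. x \<notin> F} = V x"
    unfolding topspace_tight_top Vset_def by blast
  then show ?thesis
    using openin_V[OF assms] unfolding closedin_def topspace_tight_top by auto
qed

lemma Hausdorff_tight_top: "Hausdorff_space T"
  unfolding Hausdorff_space_def topspace_tight_top
proof (intro allI impI, elim conjE)
  fix F G assume F: "F \<in> spec" and G: "G \<in> spec" and "F \<noteq> G"
  then obtain e where "e \<in> P" "(e \<in> F \<and> e \<notin> G) \<or> (e \<in> G \<and> e \<notin> F)"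
    using spec_D(1) by blast
  then show "\<exists>U W. openin T U \<and> openin T W \<and> F \<in> U \<and> G \<in> W \<and> disjnt U W"
    using openin_V openin_not_V F G unfolding Vset_def disjnt_def by blast
qed

end

abbreviation cantor_cube :: "'i set \<Rightarrow> ('i \<Rightarrow> bool) topology" where
  "cantor_cube I \<equiv> product_topology (\<lambda>_. discrete_topology UNIV) I"

lemma closedin_cantor_cube_coordinate:
  assumes "i \<in> I"
  shows "closedin (cantor_cube I) {f \<in> topspace (cantor_cube I). f i = v}"
  using closedin_continuous_map_preimage[OF continuous_map_product_projection[OF assms],
      of "\<lambda>_. discrete_topology UNIV" "{v}"]
  by simp

lemma openin_cantor_cube_coordinate:
  assumes "i \<in> I"
  shows "openin (cantor_cube I) {f \<in> topspace (cantor_cube I). f i = v}"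
  using openin_continuous_map_preimage[OF continuous_map_product_projection[OF assms],
      of "\<lambda>_. discrete_topology UNIV" "{v}"]
  by simp

lemma closedin_cantor_cube_clause:
  assumes "finite A" "finite B" "A \<subseteq> I" "B \<subseteq> I"
  shows "closedin (cantor_cube I)
           {f \<in> topspace (cantor_cube I). (\<forall>a\<in>A. f a) \<longrightarrow> (\<exists>b\<in>B. f b)}"
proof -
  let ?C = "\<lambda>i v. {f \<in> topspace (cantor_cube I). f i = v}"
  have "{f \<in> topspace (cantor_cube I). (\<forall>a\<in>A. f a) \<longrightarrow> (\<exists>b\<in>B. f b)}
          = \<Union>((\<lambda>a. ?C a False) ` A) \<union> \<Union>((\<lambda>b. ?C b True) ` B)"
    by auto
  moreover have "closedin (cantor_cube I) (\<Union>((\<lambda>a. ?C a False) ` A) \<union> \<Union>((\<lambda>b. ?C b True) ` B))"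
    using assms closedin_cantor_cube_coordinate[of _ I False] closedin_cantor_cube_coordinate[of _ I True]
    by (intro closedin_Un closedin_Union) auto
  ultimately show ?thesis by simp
qed

context zero_semilattice
begin

text \<open>Tightness of a filter is a conjunction of clauses ``if all of A are in the filter, then one
  of B is'' with finite A and B; this makes the tight filters through x a closed subset of the
  Cantor cube on P.\<close>

definition tight_clauses :: "('a set \<times> 'a set) set" where
  "tight_clauses = {({z}, {})} \<union> {({a}, {b}) | a b. a \<in> P \<and> b \<in> P \<and> sle m a b}
     \<union> {({a, b}, {m a b}) | a b. a \<in> P \<and> b \<in> P} \<union> {({a}, C) | a C. a \<in> P \<and> is_cover P m z a C}"

lemma tight_clauses_finite:
  "(A, B) \<in> tight_clauses \<Longrightarrow> finite A \<and> finite B \<and> A \<subseteq> P \<and> B \<subseteq> P"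
  unfolding tight_clauses_def is_cover_def using zero_in closed by auto

lemma ball_tight_clauses:
  "(\<forall>AB\<in>tight_clauses. Q (fst AB) (snd AB)) \<longleftrightarrow>
     Q {z} {} \<and> (\<forall>a\<in>P. \<forall>b\<in>P. sle m a b \<longrightarrow> Q {a} {b}) \<and> (\<forall>a\<in>P. \<forall>b\<in>P. Q {a, b} {m a b}) \<and>
     (\<forall>a\<in>P. \<forall>C. is_cover P m z a C \<longrightarrow> Q {a} C)"
proof -
  have "(\<forall>AB\<in>{({a}, {b}) | a b. a \<in> P \<and> b \<in> P \<and> sle m a b}. Q (fst AB) (snd AB))
      \<longleftrightarrow> (\<forall>a\<in>P. \<forall>b\<in>P. sle m a b \<longrightarrow> Q {a} {b})"
    "(\<forall>AB\<in>{({a, b}, {m a b}) | a b. a \<in> P \<and> b \<in> P}. Q (fst AB) (snd AB))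
      \<longleftrightarrow> (\<forall>a\<in>P. \<forall>b\<in>P. Q {a, b} {m a b})"
    "(\<forall>AB\<in>{({a}, C) | a C. a \<in> P \<and> is_cover P m z a C}. Q (fst AB) (snd AB))
      \<longleftrightarrow> (\<forall>a\<in>P. \<forall>C. is_cover P m z a C \<longrightarrow> Q {a} C)"
    by auto
  then show ?thesis
    unfolding tight_clauses_def ball_Un by simp
qed

lemma tight_filter_iff_clauses:
  "tight_filter P m z {i \<in> P. f i} \<longleftrightarrow>
     (\<exists>i\<in>P. f i) \<and> (\<forall>AB\<in>tight_clauses. (\<forall>a\<in>fst AB. f a) \<longrightarrow> (\<exists>b\<in>snd AB. f b))"
    (is "tight_filter P m z ?F \<longleftrightarrow> _")
proof -
  have "(\<forall>AB\<in>tight_clauses. (\<forall>a\<in>fst AB. f a) \<longrightarrow> (\<exists>b\<in>snd AB. f b)) \<longleftrightarrow>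
      \<not> f z \<and> (\<forall>a\<in>P. \<forall>b\<in>P. sle m a b \<longrightarrow> f a \<longrightarrow> f b) \<and> (\<forall>a\<in>P. \<forall>b\<in>P. f a \<and> f b \<longrightarrow> f (m a b))
      \<and> (\<forall>a\<in>P. \<forall>C. is_cover P m z a C \<longrightarrow> f a \<longrightarrow> (\<exists>c\<in>C. f c))"
    using ball_tight_clauses[of "\<lambda>A B. (\<forall>a\<in>A. f a) \<longrightarrow> (\<exists>b\<in>B. f b)"] by simp
  moreover have "tight_filter P m z ?F \<longleftrightarrow>
      (\<exists>i\<in>P. f i) \<and> \<not> f z \<and> (\<forall>a\<in>P. \<forall>b\<in>P. sle m a b \<longrightarrow> f a \<longrightarrow> f b)
      \<and> (\<forall>a\<in>P. \<forall>b\<in>P. f a \<and> f b \<longrightarrow> f (m a b))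
      \<and> (\<forall>a\<in>P. \<forall>C. is_cover P m z a C \<longrightarrow> f a \<longrightarrow> (\<exists>c\<in>C. f c))"
  proof -
    have "C \<inter> ?F \<noteq> {} \<longleftrightarrow> (\<exists>c\<in>C. f c)" if "is_cover P m z a C" for a C
      using that unfolding is_cover_def by blast
    then show ?thesis
      unfolding tight_filter_def is_filter_def using zero_in closed
      by (simp add: Ball_def Bex_def) blast
  qed
  ultimately show ?thesis
    by (simp only:)
qed

lemma closedin_tight_filters_through:
  assumes x: "x \<in> P"
  shows "closedin (cantor_cube P)
           {f \<in> topspace (cantor_cube P). f x \<and> tight_filter P m z {i \<in> P. f i}}"
proof -
  define clause where
    "clause AB = {f \<in> topspace (cantor_cube P). (\<forall>a\<in>fst AB. f a) \<longrightarrow> (\<exists>b\<in>snd AB. f b)}" for AB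
  have "{f \<in> topspace (cantor_cube P). f x \<and> tight_filter P m z {i \<in> P. f i}}
      = \<Inter>(clause ` insert ({}, {x}) tight_clauses)"
    unfolding clause_def tight_filter_iff_clauses using x by auto
  moreover have "closedin (cantor_cube P) (\<Inter>(clause ` insert ({}, {x}) tight_clauses))"
  proof (rule closedin_Inter)
    fix S assume "S \<in> clause ` insert ({}, {x}) tight_clauses"
    then obtain A B where "S = clause (A, B)" "finite A" "finite B" "A \<subseteq> P" "B \<subseteq> P"
      using x tight_clauses_finite by fastforce
    then show "closedin (cantor_cube P) S"
      using closedin_cantor_cube_clause[of A B P] unfolding clause_def by simp
  qed blast
  ultimately show ?thesis
    by simp
qed

lemma continuous_map_tight_filter:
  assumes K: "K \<subseteq> {f \<in> topspace (cantor_cube P). tight_filter P m z {i \<in> P. f i}}"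
  shows "continuous_map (subtopology (cantor_cube P) K) T (\<lambda>f. {i \<in> P. f i})"
  unfolding tight_top_def continuous_on_generated_topo_iff Union_tight_subbasis
proof (intro conjI allI impI)
  have topK: "topspace (subtopology (cantor_cube P) K) = K"
    unfolding topspace_subtopology using K by blast
  fix U assume "U \<in> {{F \<in> spec. y \<in> F} | y. y \<in> P} \<union> {{F \<in> spec. y \<notin> F} | y. y \<in> P}"
  then obtain y v where y: "y \<in> P" and U: "U = {F \<in> spec. (y \<in> F) = v}"
    by blast
  have "(\<lambda>f. {i \<in> P. f i}) -` U \<inter> K = K \<inter> {f \<in> topspace (cantor_cube P). f y = v}"
    unfolding U tight_spec_def using K y by blast
  moreover have "openin (subtopology (cantor_cube P) K) (K \<inter> {f \<in> topspace (cantor_cube P). f y = v})"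
    using openin_cantor_cube_coordinate[OF y] by (rule openin_subtopology_Int2)
  ultimately show "openin (subtopology (cantor_cube P) K)
      ((\<lambda>f. {i \<in> P. f i}) -` U \<inter> topspace (subtopology (cantor_cube P) K))"
    unfolding topK by simp
next
  show "(\<lambda>f. {i \<in> P. f i}) ` topspace (subtopology (cantor_cube P) K) \<subseteq> spec"
    unfolding topspace_subtopology tight_spec_def using K by blast
qed

lemma compactin_V:
  assumes x: "x \<in> P"
  shows "compactin T (V x)"
proof -
  define K where "K = {f \<in> topspace (cantor_cube P). f x \<and> tight_filter P m z {i \<in> P. f i}}"
  have "compactin (cantor_cube P) K"
    unfolding K_def using closedin_tight_filters_through[OF x]
    by (intro closedin_compact_space) (simp_all add: compact_space_product_topology compact_space_discrete_topology)
  then have "compactin (subtopology (cantor_cube P) K) K"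
    by (simp add: compactin_subtopology)
  moreover have "continuous_map (subtopology (cantor_cube P) K) T (\<lambda>f. {i \<in> P. f i})"
    by (rule continuous_map_tight_filter) (auto simp: K_def)
  ultimately have "compactin T ((\<lambda>f. {i \<in> P. f i}) ` K)"
    by (rule image_compactin)
  moreover have "(\<lambda>f. {i \<in> P. f i}) ` K = V x"
  proof
    show "(\<lambda>f. {i \<in> P. f i}) ` K \<subseteq> V x"
    proof
      fix F assume "F \<in> (\<lambda>f. {i \<in> P. f i}) ` K"
      then obtain f where "f \<in> K" "F = {i \<in> P. f i}"
        by blast
      then show "F \<in> V x"
        unfolding K_def Vset_def tight_spec_def using x by simp
    qed
    show "V x \<subseteq> (\<lambda>f. {i \<in> P. f i}) ` K"
    proof
      fix F assume F: "F \<in> V x"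
      define f where "f = restrict (\<lambda>i. i \<in> F) P"
      have "F \<subseteq> P"
        using F spec_D(1) unfolding Vset_def by blast
      then have "{i \<in> P. f i} = F"
        unfolding f_def by auto
      moreover have "f \<in> topspace (cantor_cube P)" "f x"
        unfolding f_def using F x by (simp_all add: Vset_def)
      ultimately have "f \<in> K"
        using F unfolding K_def Vset_def tight_spec_def by simp
      then show "F \<in> (\<lambda>f. {i \<in> P. f i}) ` K"
        using \<open>{i \<in> P. f i} = F\<close> by blast
    qed
  qed
  ultimately show ?thesis
    by simp
qed

end

section \<open>Compact open sets\<close>

lemma gba_hom_empty: "gba_hom \<D> h \<Longrightarrow> {} \<in> \<D> \<Longrightarrow> h {} = {}"
  unfolding gba_hom_def by (metis Diff_cancel)

lemma gba_hom_Diff: "gba_hom \<D> h \<Longrightarrow> U \<in> \<D> \<Longrightarrow> W \<in> \<D> \<Longrightarrow> h (U - W) = h U - h W"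
  unfolding gba_hom_def by blast

lemma gba_hom_Union:
  assumes h: "gba_hom \<D> h" and "{} \<in> \<D>" and Un: "\<And>U W. U \<in> \<D> \<Longrightarrow> W \<in> \<D> \<Longrightarrow> U \<union> W \<in> \<D>"
  shows "finite \<U> \<Longrightarrow> \<U> \<subseteq> \<D> \<Longrightarrow> h (\<Union>\<U>) = \<Union>(h ` \<U>) \<and> \<Union>\<U> \<in> \<D>"
proof (induction rule: finite_induct)
  case empty
  then show ?case using gba_hom_empty[OF h] \<open>{} \<in> \<D>\<close> by simp
next
  case (insert U \<U>)
  then have "U \<in> \<D>" "h (\<Union>\<U>) = \<Union>(h ` \<U>)" "\<Union>\<U> \<in> \<D>" by auto
  then show ?case using h Un unfolding gba_hom_def by simp
qed

lemma gba_ideal_Union: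
  assumes "gba_ideal \<T> I"
  shows "finite \<U> \<Longrightarrow> \<U> \<subseteq> I \<Longrightarrow> \<Union>\<U> \<in> I"
  by (induction rule: finite_induct) (use assms in \<open>auto simp: gba_ideal_def\<close>)

lemma empty_in_ideal_gen: "{} \<in> ideal_gen \<T> B"
  unfolding ideal_gen_def gba_ideal_def by blast

lemma generator_in_ideal_gen: "U \<in> B \<Longrightarrow> U \<in> ideal_gen \<T> B"
  unfolding ideal_gen_def by blast

context zero_semilattice
begin

abbreviation "Tcs \<equiv> Tc P m z"

lemma idem_eq: "idem P m = P"
  unfolding idem_def using idem by blast

definition down_closed :: "'a set \<Rightarrow> bool" where
  "down_closed D \<longleftrightarrow> D \<subseteq> P \<and> (\<forall>x\<in>D. \<forall>y\<in>P. sle m y x \<longrightarrow> y \<in> D)"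

lemma down_closed_P: "down_closed P"
  unfolding down_closed_def by blast

lemma down_closed_meet: "down_closed D \<Longrightarrow> x \<in> D \<Longrightarrow> y \<in> P \<Longrightarrow> m x y \<in> D"
  unfolding down_closed_def using closed meet_sle1 by blast

lemma Tc_iff: "U \<in> Tcs \<longleftrightarrow> openin T U \<and> compactin T U"
  by (simp add: Tc_def)

lemma Tc_subset_spec: "U \<in> Tcs \<Longrightarrow> U \<subseteq> spec"
  unfolding Tc_iff using openin_subset topspace_tight_top by metis

lemma Tc_empty: "{} \<in> Tcs"
  unfolding Tc_iff by simp

lemma Tc_Un: "U \<in> Tcs \<Longrightarrow> W \<in> Tcs \<Longrightarrow> U \<union> W \<in> Tcs"
  unfolding Tc_iff by (simp add: compactin_Un openin_Un)

lemma Tc_Diff: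
  assumes U: "U \<in> Tcs" and W: "W \<in> Tcs"
  shows "U - W \<in> Tcs"
proof -
  have "closedin T U" "closedin T W"
    using U W Hausdorff_tight_top compactin_imp_closedin unfolding Tc_iff by blast+
  then have "openin T (U - W)" "closedin T (U - W)"
    using U W unfolding Tc_iff by auto
  then show ?thesis
    using U closed_compactin[of T U "U - W"] unfolding Tc_iff by blast
qed

lemma Tc_Int: "U \<in> Tcs \<Longrightarrow> W \<in> Tcs \<Longrightarrow> U \<inter> W \<in> Tcs"
  using Tc_Diff by (metis Diff_Diff_Int)

definition basic :: "'a \<Rightarrow> 'a set \<Rightarrow> 'a set set" where
  "basic x Y = V x - \<Union>(V ` Y)"

definition basic_index :: "'a set \<Rightarrow> 'a \<times> 'a set \<Rightarrow> bool" where
  "basic_index D p \<longleftrightarrow> fst p \<in> D \<and> finite (snd p) \<and> snd p \<subseteq> D"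

definition basic_union :: "('a \<times> 'a set) set \<Rightarrow> 'a set set" where
  "basic_union \<B> = (\<Union>p\<in>\<B>. basic (fst p) (snd p))"

lemma basic_empty: "basic x {} = V x"
  by (simp add: basic_def)

lemma basic_subset_V: "basic x Y \<subseteq> V x"
  by (simp add: basic_def)

lemma basic_Int_V: "x \<in> P \<Longrightarrow> x' \<in> P \<Longrightarrow> basic x Y \<inter> V x' = basic (m x x') Y"
  unfolding basic_def using V_Int[of x x'] by blast

lemma basic_meet_exclusions:
  assumes "x \<in> P" "Y \<subseteq> P"
  shows "basic x Y = basic x (m x ` Y)"
  unfolding basic_def using V_Int assms by blast

lemma basic_in_Tc:
  assumes "x \<in> P" "finite Y" "Y \<subseteq> P"
  shows "basic x Y \<in> Tcs"
proof -
  have "openin T (\<Union>(V ` Y))"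
    using openin_V assms(3) by (intro openin_Union) blast
  moreover have "closedin T (\<Union>(V ` Y))"
    using closedin_V assms by (intro closedin_Union) auto
  ultimately have "openin T (basic x Y)" "closedin T (basic x Y)"
    unfolding basic_def using assms(1) openin_V closedin_V by auto
  then show ?thesis
    using closed_compactin[OF compactin_V[OF assms(1)] basic_subset_V] unfolding Tc_iff by blast
qed

lemma V_in_Tc: "x \<in> P \<Longrightarrow> V x \<in> Tcs"
  using basic_in_Tc[of x "{}"] by (simp add: basic_empty)

lemma basic_union_in_Tc:
  "finite \<B> \<Longrightarrow> \<forall>p\<in>\<B>. basic_index P p \<Longrightarrow> basic_union \<B> \<in> Tcs"
  unfolding basic_union_def
proof (induction rule: finite_induct)
  case (insert p \<B>)
  then show ?case using basic_in_Tc[of "fst p" "snd p"] Tc_Un by (auto simp: basic_index_def)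
qed (simp add: Tc_empty)

lemma basic_neighbourhood:
  assumes "openin T U" "F \<in> U"
  shows "\<exists>x Y. basic_index P (x, Y) \<and> F \<in> basic x Y \<and> basic x Y \<subseteq> U"
proof -
  have "generate_topology_on ({{F \<in> spec. x \<in> F} | x. x \<in> P} \<union> {{F \<in> spec. x \<notin> F} | x. x \<in> P}) U"
    using assms(1) unfolding tight_top_def by (rule openin_topology_generated_by)
  then show ?thesis using assms(2)
  proof (induction arbitrary: F)
    case (Int U1 U2)
    obtain x Y x' Y' where "basic_index P (x, Y)" "F \<in> basic x Y" "basic x Y \<subseteq> U1"
      "basic_index P (x', Y')" "F \<in> basic x' Y'" "basic x' Y' \<subseteq> U2"
      using Int.IH Int.prems by blast
    moreover have "basic x Y \<inter> basic x' Y' = basic (m x x') (Y \<union> Y')"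
      using calculation V_Int[of x x'] unfolding basic_def basic_index_def by auto
    ultimately show ?case
      using closed by (intro exI[of _ "m x x'"] exI[of _ "Y \<union> Y'"]) (auto simp: basic_index_def)
  next
    case (UN \<K>)
    then show ?case by blast
  next
    case (Basis S)
    then obtain y where y: "y \<in> P" "S = {F \<in> spec. y \<in> F} \<or> S = {F \<in> spec. y \<notin> F}"
      by blast
    then show ?case
    proof (elim disjE)
      assume "S = {F \<in> spec. y \<in> F}"
      then show ?thesis
        using y Basis.prems by (intro exI[of _ y] exI[of _ "{}"]) (auto simp: basic_def Vset_def basic_index_def)
    next
      assume S: "S = {F \<in> spec. y \<notin> F}"
      then have F: "F \<in> spec" "y \<notin> F" using Basis.prems by auto
      then obtain x where "x \<in> F" "x \<in> P" using spec_D(1,3) by blast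
      then show ?thesis
        using F S y by (intro exI[of _ x] exI[of _ "{y}"]) (auto simp: basic_def Vset_def basic_index_def)
    qed
  qed simp
qed

definition Tc_ideal :: "'a set \<Rightarrow> 'a set set set" where
  "Tc_ideal D = {U \<in> Tcs. U \<subseteq> \<Union>(V ` D)}"

lemma Tc_ideal_P: "Tc_ideal P = Tcs"
  unfolding Tc_ideal_def Vset_def using Tc_subset_spec spec_D(1,3) by fastforce

lemma V_in_Tc_ideal: "D \<subseteq> P \<Longrightarrow> x \<in> D \<Longrightarrow> V x \<in> Tc_ideal D"
  unfolding Tc_ideal_def using V_in_Tc by blast

lemma Tc_ideal_Un: "U \<in> Tc_ideal D \<Longrightarrow> W \<in> Tc_ideal D \<Longrightarrow> U \<union> W \<in> Tc_ideal D"
  unfolding Tc_ideal_def using Tc_Un by blast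

lemma Tc_ideal_Diff: "U \<in> Tc_ideal D \<Longrightarrow> W \<in> Tc_ideal D \<Longrightarrow> U - W \<in> Tc_ideal D"
  unfolding Tc_ideal_def using Tc_Diff by blast

lemma Tc_ideal_Int: "U \<in> Tc_ideal D \<Longrightarrow> W \<in> Tc_ideal D \<Longrightarrow> U \<inter> W \<in> Tc_ideal D"
  unfolding Tc_ideal_def using Tc_Int by blast

lemma gba_ideal_Tc_ideal: "gba_ideal Tcs (Tc_ideal D)"
  unfolding gba_ideal_def Tc_ideal_def using Tc_Un Tc_empty by blast

lemma basic_union_Tc_ideal:
  assumes "D \<subseteq> P" "finite \<B>" "\<forall>p\<in>\<B>. basic_index D p"
  shows "basic_union \<B> \<in> Tc_ideal D"
proof -
  have "basic_union \<B> \<in> Tcs"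
    using assms basic_union_in_Tc[of \<B>] by (auto simp: basic_index_def)
  moreover have "basic_union \<B> \<subseteq> \<Union>(V ` D)"
    using assms(3) basic_subset_V unfolding basic_union_def basic_index_def by blast
  ultimately show ?thesis
    unfolding Tc_ideal_def by blast
qed

lemma basic_Int_V_down_closed:
  assumes D: "down_closed D" and "d \<in> D" and "basic_index P (x, Y)"
  shows "basic x Y \<inter> V d = basic (m x d) (m (m x d) ` Y) \<and> basic_index D (m x d, m (m x d) ` Y)"
proof -
  have P: "x \<in> P" "d \<in> P" "Y \<subseteq> P" "finite Y"
    using assms D by (auto simp: basic_index_def down_closed_def)
  then have "m x d \<in> D"
    using D \<open>d \<in> D\<close> down_closed_meet commute by metis
  moreover have "m (m x d) ` Y \<subseteq> D"
    using calculation P D down_closed_meet by blast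
  moreover have "basic x Y \<inter> V d = basic (m x d) (m (m x d) ` Y)"
    using basic_Int_V[of x d Y] basic_meet_exclusions[of "m x d" Y] P closed by simp
  ultimately show ?thesis
    using P by (simp add: basic_index_def)
qed

text \<open>Compactness reduces a cover by basic sets to a finite one; intersecting with V d first
  puts the indices into D.\<close>

lemma Tc_ideal_basic_union:
  assumes D: "down_closed D" and U: "U \<in> Tc_ideal D"
  shows "\<exists>\<B>. finite \<B> \<and> (\<forall>p\<in>\<B>. basic_index D p) \<and> U = basic_union \<B>"
proof -
  define Q where "Q = {p. basic_index D p \<and> basic (fst p) (snd p) \<subseteq> U}"
  have "U \<subseteq> \<Union>((\<lambda>p. basic (fst p) (snd p)) ` Q)"
  proof
    fix F assume F: "F \<in> U"
    obtain d where d: "d \<in> D" "F \<in> V d"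
      using U F unfolding Tc_ideal_def by blast
    obtain x Y where xY: "basic_index P (x, Y)" "F \<in> basic x Y" "basic x Y \<subseteq> U"
      using basic_neighbourhood U F unfolding Tc_ideal_def Tc_iff by blast
    with basic_Int_V_down_closed[OF D d(1) xY(1)] d(2)
    have "(m x d, m (m x d) ` Y) \<in> Q" "F \<in> basic (m x d) (m (m x d) ` Y)"
      unfolding Q_def by auto
    then show "F \<in> \<Union>((\<lambda>p. basic (fst p) (snd p)) ` Q)"
      by force
  qed
  moreover have "openin T (basic (fst p) (snd p))" if "p \<in> Q" for p
    using that D basic_in_Tc[of "fst p" "snd p"]
    unfolding Q_def Tc_iff basic_index_def down_closed_def by auto
  moreover have "compactin T U"
    using U unfolding Tc_ideal_def Tc_iff by blast
  ultimately obtain \<F> where \<F>: "finite \<F>" "\<F> \<subseteq> (\<lambda>p. basic (fst p) (snd p)) ` Q" "U \<subseteq> \<Union>\<F>"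
    unfolding compactin_def by (metis (no_types, lifting) imageE)
  obtain \<B> where "\<B> \<subseteq> Q" "finite \<B>" "\<F> = (\<lambda>p. basic (fst p) (snd p)) ` \<B>"
    using finite_subset_image[OF \<F>(1,2)] by blast
  moreover from this have "U = basic_union \<B>"
    using \<F>(3) unfolding basic_union_def Q_def by auto
  ultimately show ?thesis
    unfolding Q_def by blast
qed

lemma ideal_gen_V_eq_Tc_ideal:
  assumes D: "down_closed D"
  shows "ideal_gen Tcs {V x | x. x \<in> D} = Tc_ideal D"
proof -
  have DP: "D \<subseteq> P" using D by (simp add: down_closed_def)
  have "Tc_ideal D \<subseteq> I" if I: "gba_ideal Tcs I" "{V x | x. x \<in> D} \<subseteq> I" for I
  proof
    fix U assume "U \<in> Tc_ideal D"
    then obtain \<B> where \<B>: "finite \<B>" "\<forall>p\<in>\<B>. basic_index D p" "U = basic_union \<B>"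
      using Tc_ideal_basic_union D by blast
    have "basic (fst p) (snd p) \<in> I" if "p \<in> \<B>" for p
    proof -
      have p: "fst p \<in> D" "finite (snd p)" "snd p \<subseteq> D"
        using that \<B>(2) by (auto simp: basic_index_def)
      then have "V (fst p) \<in> I" "basic (fst p) (snd p) \<in> Tcs"
        using I(2) DP basic_in_Tc[of "fst p" "snd p"] by auto
      then show ?thesis
        using I(1) basic_subset_V unfolding gba_ideal_def by blast
    qed
    then show "U \<in> I"
      using gba_ideal_Union[OF I(1), of "(\<lambda>p. basic (fst p) (snd p)) ` \<B>"] \<B>(1)
      unfolding \<B>(3) basic_union_def by blast
  qed
  moreover have "{V x | x. x \<in> D} \<subseteq> Tc_ideal D"
    using V_in_Tc_ideal DP by blast
  ultimately show ?thesis
    unfolding ideal_gen_def using gba_ideal_Tc_ideal by blast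
qed

lemma gba_hom_basic_union:
  assumes h: "gba_hom \<D> h" and empty: "{} \<in> \<D>"
    and Un: "\<And>U W. U \<in> \<D> \<Longrightarrow> W \<in> \<D> \<Longrightarrow> U \<union> W \<in> \<D>"
    and Diff: "\<And>U W. U \<in> \<D> \<Longrightarrow> W \<in> \<D> \<Longrightarrow> U - W \<in> \<D>"
    and V_D: "\<And>x. x \<in> D \<Longrightarrow> V x \<in> \<D>"
    and \<B>: "finite \<B>" "\<forall>p\<in>\<B>. basic_index D p"
  shows "h (basic_union \<B>) = (\<Union>p\<in>\<B>. h (V (fst p)) - \<Union>((\<lambda>y. h (V y)) ` snd p))"
proof -
  note Union = gba_hom_Union[OF h empty Un]
  have basic: "h (basic (fst p) (snd p)) = h (V (fst p)) - \<Union>((\<lambda>y. h (V y)) ` snd p)"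
    "basic (fst p) (snd p) \<in> \<D>" if "p \<in> \<B>" for p
  proof -
    have p: "fst p \<in> D" "finite (snd p)" "snd p \<subseteq> D"
      using that \<B>(2) by (auto simp: basic_index_def)
    then have "V ` snd p \<subseteq> \<D>"
      using V_D by blast
    then have "h (\<Union>(V ` snd p)) = \<Union>((\<lambda>y. h (V y)) ` snd p)" "\<Union>(V ` snd p) \<in> \<D>"
      using Union[of "V ` snd p"] p(2) by (simp_all add: image_image)
    moreover have "V (fst p) \<in> \<D>"
      using V_D p(1) .
    ultimately show "h (basic (fst p) (snd p)) = h (V (fst p)) - \<Union>((\<lambda>y. h (V y)) ` snd p)"
      "basic (fst p) (snd p) \<in> \<D>"
      unfolding basic_def using gba_hom_Diff[OF h] Diff by simp_all
  qed
  have "(\<lambda>p. basic (fst p) (snd p)) ` \<B> \<subseteq> \<D>"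
    using basic(2) by blast
  then have "h (basic_union \<B>) = \<Union>(h ` (\<lambda>p. basic (fst p) (snd p)) ` \<B>)"
    unfolding basic_union_def using Union \<B>(1) by simp
  then show ?thesis
    using basic(1) by (simp add: image_image)
qed

end

section \<open>Cover-preserving inclusions of semilattices\<close>

locale cover_embedding = L1: zero_semilattice P1 m z + L2: zero_semilattice P2 m z for P1 P2 m z +
  assumes subset: "P1 \<subseteq> P2"
    and cover_preserved: "x \<in> P1 \<Longrightarrow> is_cover P1 m z x C \<Longrightarrow> is_cover P2 m z x C"
begin

text \<open>The only use of the hypothesis that covers in P1 remain covers in P2.\<close>

lemma restrict_in_spec:
  assumes F: "F \<in> L2.spec" and "F \<inter> P1 \<noteq> {}"
  shows "F \<inter> P1 \<in> L1.spec"
proof -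
  have "is_filter P1 m z (F \<inter> P1)"
    unfolding is_filter_def
  proof (intro conjI ballI impI)
    show "F \<inter> P1 \<subseteq> P1" "F \<inter> P1 \<noteq> {}" "z \<notin> F \<inter> P1"
      using assms L2.spec_D(2)[OF F] by blast+
  next
    fix a b assume "a \<in> F \<inter> P1" "b \<in> P1" "sle m a b"
    then show "b \<in> F \<inter> P1" using L2.spec_D(4)[OF F] subset by blast
  next
    fix a b assume "a \<in> F \<inter> P1" "b \<in> F \<inter> P1"
    then show "m a b \<in> F \<inter> P1" using L2.spec_D(5)[OF F] L1.closed by blast
  qed
  moreover have "C \<inter> (F \<inter> P1) \<noteq> {}" if "x \<in> F \<inter> P1" "is_cover P1 m z x C" for x C
  proof -
    have "C \<inter> F \<noteq> {}"
      using cover_preserved L2.spec_D(6)[OF F] that by blast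
    moreover have "C \<subseteq> P1"
      using that(2) by (simp add: is_cover_def)
    ultimately show ?thesis by blast
  qed
  ultimately show ?thesis
    unfolding tight_spec_def tight_filter_def by blast
qed

lemma extend_to_spec:
  assumes G: "G \<in> L1.spec" and x0: "x0 \<in> G"
    and X0: "finite X0" "X0 \<subseteq> G" and Y0: "finite Y0" "Y0 \<subseteq> P1 - G"
  shows "\<exists>F\<in>L2.spec. x0 \<in> F \<and> X0 \<subseteq> F \<and> Y0 \<inter> F = {}"
proof -
  obtain x where x: "x \<in> G" "sle m x x0" "\<forall>x'\<in>X0. sle m x x'"
    using L1.spec_lower_bound[OF G x0 X0] by blast
  obtain w where w: "w \<in> P1" "w \<noteq> z" "sle m w x" "\<forall>y\<in>Y0. m (m x y) w = z"
    using L1.spec_exclusion_witness[OF G x(1) Y0] by blast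
  obtain F where F: "F \<in> L2.spec" "w \<in> F"
    using L2.exists_tight_filter[of w] w subset by blast
  have "x \<in> P1" "x0 \<in> P1" "X0 \<subseteq> P1"
    using x(1) x0 X0 L1.spec_D(1)[OF G] by blast+
  then have "x \<in> F" "x0 \<in> F" "X0 \<subseteq> F"
    using L2.spec_D(4)[OF F(1)] F(2) w(3) x subset by blast+
  moreover have "y \<notin> F" if "y \<in> Y0" for y
  proof
    assume "y \<in> F"
    then have "m (m x y) w \<in> F"
      using L2.spec_D(5)[OF F(1)] \<open>x \<in> F\<close> F(2) by blast
    then show False
      using w(4) that L2.spec_D(2)[OF F(1)] by simp
  qed
  ultimately show ?thesis
    using F(1) by blast
qed

lemma restrict_surj_fip:
  assumes G: "G \<in> L1.spec" and x0: "x0 \<in> G"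
    and \<F>: "finite \<F>" "\<F> \<subseteq> L2.V ` G \<union> (\<lambda>y. {F \<in> L2.spec. y \<notin> F}) ` (P1 - G)"
  shows "L2.V x0 \<inter> \<Inter>\<F> \<noteq> {}"
proof -
  let ?N = "\<lambda>y. {F \<in> L2.spec. y \<notin> F}"
  have "\<F> = (\<F> \<inter> L2.V ` G) \<union> (\<F> \<inter> ?N ` (P1 - G))"
    using \<F>(2) by blast
  moreover obtain X0 where "X0 \<subseteq> G" "finite X0" "\<F> \<inter> L2.V ` G = L2.V ` X0"
    using finite_subset_image[of "\<F> \<inter> L2.V ` G" L2.V G] \<F>(1) by blast
  moreover obtain Y0 where "Y0 \<subseteq> P1 - G" "finite Y0" "\<F> \<inter> ?N ` (P1 - G) = ?N ` Y0"
    using finite_subset_image[of "\<F> \<inter> ?N ` (P1 - G)" ?N "P1 - G"] \<F>(1) by blast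
  ultimately have XY: "X0 \<subseteq> G" "finite X0" "Y0 \<subseteq> P1 - G" "finite Y0" "\<F> = L2.V ` X0 \<union> ?N ` Y0"
    by simp_all
  obtain F where "F \<in> L2.spec" "x0 \<in> F" "X0 \<subseteq> F" "Y0 \<inter> F = {}"
    using extend_to_spec[OF G x0 XY(2,1,4,3)] by blast
  then have "F \<in> L2.V x0 \<inter> \<Inter>\<F>"
    unfolding XY(5) Vset_def by blast
  then show ?thesis
    by blast
qed

lemma restrict_surj:
  assumes G: "G \<in> L1.spec"
  shows "\<exists>F\<in>L2.spec. F \<inter> P1 = G"
proof -
  obtain x0 where x0: "x0 \<in> G"
    using L1.spec_D(3)[OF G] by blast
  have GP: "G \<subseteq> P1"
    using L1.spec_D(1)[OF G] .
  define \<U> where "\<U> = L2.V ` G \<union> (\<lambda>y. {F \<in> L2.spec. y \<notin> F}) ` (P1 - G)"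
  have "\<forall>C\<in>\<U>. closedin L2.T C"
    unfolding \<U>_def using L2.closedin_V L2.closedin_not_V GP subset by auto
  moreover have "\<forall>\<F>. finite \<F> \<and> \<F> \<subseteq> \<U> \<longrightarrow> L2.V x0 \<inter> \<Inter>\<F> \<noteq> {}"
    unfolding \<U>_def using restrict_surj_fip[OF G x0] by blast
  moreover have "compactin L2.T (L2.V x0)"
    using L2.compactin_V x0 GP subset by blast
  ultimately have "L2.V x0 \<inter> \<Inter>\<U> \<noteq> {}"
    unfolding compactin_fip by blast
  then obtain F where F: "F \<in> L2.V x0" "F \<in> \<Inter>\<U>"
    by blast
  then have "G \<subseteq> F" "F \<inter> (P1 - G) = {}"
    unfolding \<U>_def Vset_def by blast+
  then have "F \<inter> P1 = G"
    using GP by blast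
  then show ?thesis
    using F(1) unfolding Vset_def by blast
qed

end

context cover_embedding
begin

definition restrict_preimage :: "'a set set \<Rightarrow> 'a set set" where
  "restrict_preimage U = (if U \<in> L1.Tcs then {F \<in> L2.spec. F \<inter> P1 \<in> U} else {})"

lemma restrict_preimage_basic:
  assumes "x \<in> P1" "Y \<subseteq> P1"
  shows "{F \<in> L2.spec. F \<inter> P1 \<in> L1.basic x Y} = L2.basic x Y"
proof
  show "{F \<in> L2.spec. F \<inter> P1 \<in> L1.basic x Y} \<subseteq> L2.basic x Y"
    using assms unfolding L1.basic_def L2.basic_def Vset_def by blast
  show "L2.basic x Y \<subseteq> {F \<in> L2.spec. F \<inter> P1 \<in> L1.basic x Y}"
  proof
    fix F assume F: "F \<in> L2.basic x Y"
    then have "F \<in> L2.spec" "x \<in> F" "\<forall>y\<in>Y. y \<notin> F"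
      unfolding L2.basic_def Vset_def by blast+
    moreover from this have "F \<inter> P1 \<in> L1.spec"
      using restrict_in_spec assms by blast
    ultimately show "F \<in> {F \<in> L2.spec. F \<inter> P1 \<in> L1.basic x Y}"
      using assms unfolding L1.basic_def Vset_def by blast
  qed
qed

lemma restrict_preimage_basic_union:
  assumes "finite \<B>" "\<forall>p\<in>\<B>. L1.basic_index P1 p"
  shows "restrict_preimage (L1.basic_union \<B>) = L2.basic_union \<B>"
proof -
  have "L1.basic_union \<B> \<in> L1.Tcs"
    using L1.basic_union_in_Tc assms .
  then have "restrict_preimage (L1.basic_union \<B>)
      = (\<Union>p\<in>\<B>. {F \<in> L2.spec. F \<inter> P1 \<in> L1.basic (fst p) (snd p)})"
    unfolding restrict_preimage_def L1.basic_union_def by auto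
  also have "\<dots> = L2.basic_union \<B>"
    unfolding L2.basic_union_def using restrict_preimage_basic assms(2)
    by (auto simp: L1.basic_index_def)
  finally show ?thesis .
qed

lemma Tc_basic_union:
  assumes "U \<in> L1.Tcs"
  obtains \<B> where "finite \<B>" "\<forall>p\<in>\<B>. L1.basic_index P1 p" "U = L1.basic_union \<B>"
  using L1.Tc_ideal_basic_union[OF L1.down_closed_P] assms L1.Tc_ideal_P by blast

lemma inj_on_restrict_preimage: "inj_on restrict_preimage L1.Tcs"
proof -
  have "U \<subseteq> W" if UW: "U \<in> L1.Tcs" "W \<in> L1.Tcs" "restrict_preimage U = restrict_preimage W" for U W
  proof
    fix G assume "G \<in> U"
    then obtain F where "F \<in> L2.spec" "F \<inter> P1 = G"
      using restrict_surj L1.Tc_subset_spec UW(1) by blast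
    then show "G \<in> W"
      using UW \<open>G \<in> U\<close> unfolding restrict_preimage_def by auto
  qed
  then show ?thesis
    by (intro inj_onI) blast
qed

lemma restrict_preimage_in_Tc:
  assumes "U \<in> L1.Tcs"
  shows "restrict_preimage U \<in> L2.Tcs"
proof -
  obtain \<B> where \<B>: "finite \<B>" "\<forall>p\<in>\<B>. L1.basic_index P1 p" "U = L1.basic_union \<B>"
    using Tc_basic_union assms by blast
  moreover have "\<forall>p\<in>\<B>. L2.basic_index P2 p"
    using \<B>(2) subset by (auto simp: L1.basic_index_def L2.basic_index_def)
  ultimately show ?thesis
    using restrict_preimage_basic_union L2.basic_union_in_Tc by simp
qed

lemma restrict_preimage_is_embedding:
  "inj_on restrict_preimage L1.Tcs \<and> restrict_preimage ` L1.Tcs \<subseteq> L2.Tcs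
    \<and> gba_hom L1.Tcs restrict_preimage \<and> (\<forall>x\<in>P1. restrict_preimage (L1.V x) = L2.V x)
    \<and> (\<forall>U. U \<notin> L1.Tcs \<longrightarrow> restrict_preimage U = {})"
proof (intro conjI ballI allI impI)
  show "inj_on restrict_preimage L1.Tcs"
    by (rule inj_on_restrict_preimage)
  show "restrict_preimage ` L1.Tcs \<subseteq> L2.Tcs"
    using restrict_preimage_in_Tc by blast
  show "gba_hom L1.Tcs restrict_preimage"
    unfolding gba_hom_def restrict_preimage_def
    using L1.Tc_Un L1.Tc_Int L1.Tc_Diff by auto
  show "restrict_preimage (L1.V x) = L2.V x" if "x \<in> P1" for x
    using restrict_preimage_basic[of x "{}"] that L1.V_in_Tc
    unfolding restrict_preimage_def by (simp add: L1.basic_empty L2.basic_empty)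
  show "restrict_preimage U = {}" if "U \<notin> L1.Tcs" for U
    using that unfolding restrict_preimage_def by simp
qed

lemma embedding_unique:
  assumes h: "gba_hom L1.Tcs h" "\<forall>x\<in>P1. h (L1.V x) = L2.V x" "\<forall>U. U \<notin> L1.Tcs \<longrightarrow> h U = {}"
  shows "h = restrict_preimage"
proof
  fix U
  show "h U = restrict_preimage U"
  proof (cases "U \<in> L1.Tcs")
    case True
    then obtain \<B> where \<B>: "finite \<B>" "\<forall>p\<in>\<B>. L1.basic_index P1 p" "U = L1.basic_union \<B>"
      using Tc_basic_union by blast
    have "h U = (\<Union>p\<in>\<B>. h (L1.V (fst p)) - \<Union>((\<lambda>y. h (L1.V y)) ` snd p))"
      using L1.gba_hom_basic_union[OF h(1) L1.Tc_empty L1.Tc_Un L1.Tc_Diff L1.V_in_Tc \<B>(1,2)] \<B>(3)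
      by simp
    also have "\<dots> = (\<Union>p\<in>\<B>. L2.V (fst p) - \<Union>(L2.V ` snd p))"
    proof (rule SUP_cong[OF refl])
      fix p assume "p \<in> \<B>"
      then have "fst p \<in> P1" "snd p \<subseteq> P1"
        using \<B>(2) by (auto simp: L1.basic_index_def)
      then show "h (L1.V (fst p)) - \<Union>((\<lambda>y. h (L1.V y)) ` snd p) = L2.V (fst p) - \<Union>(L2.V ` snd p)"
        using h(2) by (simp add: subset_iff)
    qed
    also have "\<dots> = restrict_preimage U"
      using restrict_preimage_basic_union[OF \<B>(1,2)] \<B>(3)
      unfolding L2.basic_union_def L2.basic_def by simp
    finally show ?thesis .
  next
    case False
    then show ?thesis
      using h(3) restrict_preimage_is_embedding by simp
  qed
qed

lemma iota_V:
  assumes "x \<in> P1"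
  shows "iota P1 P2 m z (L1.V x) = L2.V x"
proof -
  have "iota P1 P2 m z = restrict_preimage"
    unfolding iota_def L1.idem_eq L2.idem_eq
    by (rule the_equality) (simp_all add: restrict_preimage_is_embedding embedding_unique)
  then show ?thesis
    using restrict_preimage_is_embedding assms by simp
qed

end

section \<open>Order isomorphisms between down-closed sets\<close>

definition transport :: "'a set \<Rightarrow> ('a \<Rightarrow> 'a \<Rightarrow> 'a) \<Rightarrow> 'a set \<Rightarrow> ('a \<Rightarrow> 'a) \<Rightarrow> 'a set \<Rightarrow> 'a set" where
  "transport P m D \<alpha> F = {w \<in> P. \<exists>x\<in>F \<inter> D. sle m (\<alpha> x) w}"

locale downset_iso = zero_semilattice P m z for P m z +
  fixes D1 D2 :: "'a set" and \<alpha> \<beta> :: "'a \<Rightarrow> 'a"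
  assumes down1: "down_closed D1" and down2: "down_closed D2"
    and \<alpha>_in: "x \<in> D1 \<Longrightarrow> \<alpha> x \<in> D2" and \<beta>_in: "y \<in> D2 \<Longrightarrow> \<beta> y \<in> D1"
    and \<beta>_\<alpha>: "x \<in> D1 \<Longrightarrow> \<beta> (\<alpha> x) = x" and \<alpha>_\<beta>: "y \<in> D2 \<Longrightarrow> \<alpha> (\<beta> y) = y"
    and \<alpha>_mono: "x \<in> D1 \<Longrightarrow> y \<in> D1 \<Longrightarrow> sle m x y \<Longrightarrow> sle m (\<alpha> x) (\<alpha> y)"
    and \<beta>_mono: "x \<in> D2 \<Longrightarrow> y \<in> D2 \<Longrightarrow> sle m x y \<Longrightarrow> sle m (\<beta> x) (\<beta> y)"
begin

lemma downset_iso_sym: "downset_iso P m z D2 D1 \<beta> \<alpha>"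
  by (intro downset_iso.intro zero_semilattice_axioms downset_iso_axioms.intro)
    (simp_all add: down1 down2 \<alpha>_in \<beta>_in \<alpha>_\<beta> \<beta>_\<alpha> \<alpha>_mono \<beta>_mono)

lemma D1_subset: "D1 \<subseteq> P" and D2_subset: "D2 \<subseteq> P"
  using down1 down2 by (simp_all add: down_closed_def)

lemma D1_down: "x \<in> D1 \<Longrightarrow> y \<in> P \<Longrightarrow> sle m y x \<Longrightarrow> y \<in> D1"
  and D2_down: "x \<in> D2 \<Longrightarrow> y \<in> P \<Longrightarrow> sle m y x \<Longrightarrow> y \<in> D2"
  using down1 down2 by (auto simp: down_closed_def)

lemma \<alpha>_meet:
  assumes x: "x \<in> D1" and y: "y \<in> D1"
  shows "\<alpha> (m x y) = m (\<alpha> x) (\<alpha> y)"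
proof -
  have P: "x \<in> P" "y \<in> P" "\<alpha> x \<in> P" "\<alpha> y \<in> P"
    using x y \<alpha>_in D1_subset D2_subset by auto
  have xy: "m x y \<in> D1" "\<alpha> (m x y) \<in> P"
    using down_closed_meet[OF down1 x P(2)] \<alpha>_in D2_subset by auto
  define c where "c = m (\<alpha> x) (\<alpha> y)"
  have c: "c \<in> D2" "c \<in> P"
    unfolding c_def using down_closed_meet[OF down2 \<alpha>_in[OF x] P(4)] closed[OF P(3,4)] by auto
  have "sle m (\<beta> c) x" "sle m (\<beta> c) y"
    using \<beta>_mono[OF c(1) \<alpha>_in[OF x]] \<beta>_mono[OF c(1) \<alpha>_in[OF y]] meet_sle1[OF P(3,4)] meet_sle2[OF P(3,4)]
      \<beta>_\<alpha>[OF x] \<beta>_\<alpha>[OF y] unfolding c_def by simp_all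
  then have "sle m (\<beta> c) (m x y)"
    using sle_meetI[OF P(1,2)] \<beta>_in[OF c(1)] D1_subset by blast
  then have "sle m c (\<alpha> (m x y))"
    using \<alpha>_mono[OF \<beta>_in[OF c(1)] xy(1)] \<alpha>_\<beta>[OF c(1)] by simp
  moreover have "sle m (\<alpha> (m x y)) c"
    unfolding c_def using sle_meetI[OF P(3,4) xy(2)] \<alpha>_mono[OF xy(1)] x y meet_sle1[OF P(1,2)] meet_sle2[OF P(1,2)]
    by blast
  ultimately show ?thesis
    using sle_antisym c(2) xy(2) unfolding c_def by blast
qed

lemma \<alpha>_zero_iff:
  assumes x: "x \<in> D1"
  shows "\<alpha> x = z \<longleftrightarrow> x = z"
proof -
  have zD: "z \<in> D1" "\<alpha> z \<in> D2"
    using D1_down[OF x zero_in] D1_subset x zero_sle \<alpha>_in by auto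
  then have "z \<in> D2"
    using D2_down[OF zD(2) zero_in] zero_sle D2_subset by blast
  then have "sle m (\<beta> z) (\<beta> (\<alpha> z))"
    using \<beta>_mono zD(2) zero_sle D2_subset by blast
  then have "\<beta> z = z"
    using \<beta>_\<alpha>[OF zD(1)] sle_zero_iff \<beta>_in[OF \<open>z \<in> D2\<close>] D1_subset by auto
  then have "\<alpha> z = z"
    using \<alpha>_\<beta>[OF \<open>z \<in> D2\<close>] by simp
  then show ?thesis
    using \<beta>_\<alpha>[OF x] \<open>\<beta> z = z\<close> by metis
qed

abbreviation "fwd \<equiv> transport P m D1 \<alpha>"
abbreviation "bwd \<equiv> transport P m D2 \<beta>"

lemma fwd_mem_iff:
  assumes F: "F \<in> spec" and y: "y \<in> D1"
  shows "\<alpha> y \<in> fwd F \<longleftrightarrow> y \<in> F"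
proof
  assume "\<alpha> y \<in> fwd F"
  then obtain x where x: "x \<in> F" "x \<in> D1" "sle m (\<alpha> x) (\<alpha> y)"
    unfolding transport_def by blast
  then have "sle m x y"
    using \<beta>_mono[OF \<alpha>_in[OF x(2)] \<alpha>_in[OF y] x(3)] \<beta>_\<alpha> y by simp
  then show "y \<in> F"
    using spec_D(4)[OF F x(1)] y D1_subset by blast
next
  assume "y \<in> F"
  then show "\<alpha> y \<in> fwd F"
    unfolding transport_def using y \<alpha>_in D2_subset sle_refl by blast
qed

lemma fwd_is_filter:
  assumes F: "F \<in> spec" and x0: "x0 \<in> F \<inter> D1"
  shows "is_filter P m z (fwd F)"
  unfolding is_filter_def
proof (intro conjI ballI impI)
  show "fwd F \<subseteq> P"
    unfolding transport_def by blast
  show "fwd F \<noteq> {}"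
    using fwd_mem_iff[OF F] x0 by blast
  show "z \<notin> fwd F"
  proof
    assume "z \<in> fwd F"
    then obtain x where x: "x \<in> F" "x \<in> D1" "sle m (\<alpha> x) z"
      unfolding transport_def by blast
    then have "\<alpha> x = z"
      using sle_zero_iff \<alpha>_in D2_subset by blast
    then show False
      using \<alpha>_zero_iff[OF x(2)] x(1) spec_D(2)[OF F] by simp
  qed
next
  fix a b assume "a \<in> fwd F" "b \<in> P" "sle m a b"
  moreover from this obtain x where "x \<in> F" "x \<in> D1" "sle m (\<alpha> x) a" "a \<in> P"
    unfolding transport_def by blast
  moreover from this have "\<alpha> x \<in> P"
    using \<alpha>_in D2_subset by blast
  ultimately show "b \<in> fwd F"
    unfolding transport_def using sle_trans[of "\<alpha> x" a b] by blast
next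
  fix a b assume "a \<in> fwd F" "b \<in> fwd F"
  then obtain x1 x2 where x: "x1 \<in> F" "x1 \<in> D1" "sle m (\<alpha> x1) a" "x2 \<in> F" "x2 \<in> D1" "sle m (\<alpha> x2) b"
    and ab: "a \<in> P" "b \<in> P"
    unfolding transport_def by blast
  have "m x1 x2 \<in> F" "m x1 x2 \<in> D1"
    using spec_D(5)[OF F x(1,4)] down_closed_meet[OF down1 x(2)] x(5) D1_subset by auto
  moreover have "\<alpha> x1 \<in> P" "\<alpha> x2 \<in> P"
    using \<alpha>_in x(2,5) D2_subset by auto
  then have "sle m (\<alpha> (m x1 x2)) (m a b)"
    using meet_mono[OF _ ab(1) _ ab(2) x(3) x(6)] \<alpha>_meet[OF x(2,5)] by simp
  ultimately show "m a b \<in> fwd F"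
    unfolding transport_def using closed[OF ab] by blast
qed

lemma pullback_meet:
  assumes x: "x \<in> D1" and y: "y \<in> D1" "sle m y x" and c: "c \<in> P"
  shows "\<beta> (m c (\<alpha> x)) \<in> D1" "\<alpha> (m (\<beta> (m c (\<alpha> x))) y) = m c (\<alpha> y)"
proof -
  have P: "\<alpha> x \<in> P" "\<alpha> y \<in> P"
    using \<alpha>_in x y D2_subset by auto
  have cx: "m c (\<alpha> x) \<in> D2"
    using D2_down[OF \<alpha>_in[OF x] closed[OF c P(1)] meet_sle2[OF c P(1)]] .
  then show b: "\<beta> (m c (\<alpha> x)) \<in> D1"
    by (rule \<beta>_in)
  have "m (\<alpha> x) (\<alpha> y) = \<alpha> y"
    using \<alpha>_mono[OF y(1) x y(2)] commute[OF P] unfolding sle_def by simp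
  then show "\<alpha> (m (\<beta> (m c (\<alpha> x))) y) = m c (\<alpha> y)"
    using \<alpha>_meet[OF b y(1)] \<alpha>_\<beta>[OF cx] assoc[OF c P] by simp
qed

lemma cover_pullback:
  assumes x: "x \<in> D1" and w: "w \<in> P" "sle m (\<alpha> x) w" and C: "is_cover P m z w C"
  shows "is_cover P m z x ((\<lambda>c. \<beta> (m c (\<alpha> x))) ` C)"
  unfolding is_cover_def
proof (intro conjI ballI impI)
  have ax: "\<alpha> x \<in> D2" "\<alpha> x \<in> P"
    using \<alpha>_in[OF x] D2_subset by auto
  have CP: "finite C" "C \<subseteq> P"
    using C unfolding is_cover_def by auto
  show "finite ((\<lambda>c. \<beta> (m c (\<alpha> x))) ` C)"
    using CP by simp
  show "(\<lambda>c. \<beta> (m c (\<alpha> x))) ` C \<subseteq> P"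
    using pullback_meet(1)[OF x x sle_refl] CP D1_subset x by blast
next
  fix b assume "b \<in> (\<lambda>c. \<beta> (m c (\<alpha> x))) ` C"
  then obtain c where c: "c \<in> C" "b = \<beta> (m c (\<alpha> x))"
    by blast
  then have "c \<in> P" "\<alpha> x \<in> P"
    using C \<alpha>_in[OF x] D2_subset unfolding is_cover_def by auto
  then have "m c (\<alpha> x) \<in> D2" "sle m (m c (\<alpha> x)) (\<alpha> x)"
    using D2_down[OF \<alpha>_in[OF x] closed meet_sle2] meet_sle2 by auto
  then show "sle m b x"
    using \<beta>_mono[OF _ \<alpha>_in[OF x]] \<beta>_\<alpha>[OF x] c(2) by simp
next
  fix y assume y: "y \<in> P" "y \<noteq> z \<and> sle m y x"
  then have yD: "y \<in> D1"
    using D1_down[OF x] by blast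
  have ay: "\<alpha> y \<in> P" "\<alpha> y \<noteq> z" "sle m (\<alpha> y) (\<alpha> x)"
    using \<alpha>_in[OF yD] D2_subset \<alpha>_zero_iff[OF yD] y \<alpha>_mono[OF yD x] by auto
  then have "sle m (\<alpha> y) w"
    using sle_trans[OF ay(1) _ w(1) _ w(2)] \<alpha>_in[OF x] D2_subset by blast
  then obtain c where c: "c \<in> C" "m c (\<alpha> y) \<noteq> z"
    using C ay unfolding is_cover_def by blast
  then have "c \<in> P"
    using C unfolding is_cover_def by blast
  then have "\<alpha> (m (\<beta> (m c (\<alpha> x))) y) \<noteq> z"
    using pullback_meet(2)[OF x yD] y c(2) by simp
  then have "m (\<beta> (m c (\<alpha> x))) y \<noteq> z"
    using \<alpha>_zero_iff down_closed_meet[OF down1 pullback_meet(1)[OF x yD] y(1)] y \<open>c \<in> P\<close> by auto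
  then show "\<exists>b\<in>(\<lambda>c. \<beta> (m c (\<alpha> x))) ` C. m b y \<noteq> z"
    using c(1) by blast
qed

lemma fwd_in_spec:
  assumes F: "F \<in> spec" and x0: "x0 \<in> F \<inter> D1"
  shows "fwd F \<in> spec"
  unfolding tight_spec_def tight_filter_def mem_Collect_eq
proof (intro conjI ballI allI impI)
  show "is_filter P m z (fwd F)"
    using fwd_is_filter[OF assms] .
  fix w C assume w: "w \<in> fwd F" and C: "is_cover P m z w C"
  then obtain x where x: "x \<in> F" "x \<in> D1" "sle m (\<alpha> x) w" "w \<in> P"
    unfolding transport_def by blast
  obtain b where "b \<in> (\<lambda>c. \<beta> (m c (\<alpha> x))) ` C" "b \<in> F"
    using spec_D(6)[OF F x(1) cover_pullback[OF x(2,4,3) C]] by blast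
  then obtain c where c: "c \<in> C" "\<beta> (m c (\<alpha> x)) \<in> F"
    by blast
  have CP: "c \<in> P" "\<alpha> x \<in> P" "\<alpha> x \<in> D2"
    using c(1) C \<alpha>_in[OF x(2)] D2_subset unfolding is_cover_def by auto
  then have "m c (\<alpha> x) \<in> D2"
    using D2_down[OF CP(3) closed[OF CP(1,2)] meet_sle2[OF CP(1,2)]] by blast
  then have "\<alpha> (\<beta> (m c (\<alpha> x))) \<in> fwd F" "\<alpha> (\<beta> (m c (\<alpha> x))) = m c (\<alpha> x)"
    using fwd_mem_iff[OF F \<beta>_in] c(2) \<alpha>_\<beta> by auto
  then have "c \<in> fwd F"
    using is_filter_D(4)[OF fwd_is_filter[OF assms] _ CP(1) meet_sle1[OF CP(1,2)]] by simp
  then show "C \<inter> fwd F \<noteq> {}"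
    using c(1) by blast
qed

end

context downset_iso
begin

lemma fwd_inverse:
  assumes F: "F \<in> spec" and x0: "x0 \<in> F \<inter> D1"
  shows "bwd (fwd F) = F"
proof
  show "bwd (fwd F) \<subseteq> F"
  proof
    fix v assume "v \<in> bwd (fwd F)"
    then obtain w where w: "v \<in> P" "w \<in> fwd F" "w \<in> D2" "sle m (\<beta> w) v"
      unfolding transport_def by blast
    then have "\<beta> w \<in> F"
      using fwd_mem_iff[OF F \<beta>_in[OF w(3)]] \<alpha>_\<beta> by simp
    then show "v \<in> F"
      using spec_D(4)[OF F] w by blast
  qed
  show "F \<subseteq> bwd (fwd F)"
  proof
    fix v assume v: "v \<in> F"
    then have vP: "v \<in> P"
      using spec_D(1)[OF F] by blast
    have x0P: "x0 \<in> P"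
      using x0 D1_subset by blast
    have "m v x0 \<in> F" "m x0 v \<in> D1"
      using spec_D(5)[OF F v] x0 down_closed_meet[OF down1 _ vP] by auto
    then have vx: "m v x0 \<in> F" "m v x0 \<in> D1"
      using commute[OF vP x0P] by simp_all
    then have "\<alpha> (m v x0) \<in> fwd F \<inter> D2" "\<beta> (\<alpha> (m v x0)) = m v x0"
      using fwd_mem_iff[OF F] \<alpha>_in \<beta>_\<alpha> by auto
    moreover have "sle m (m v x0) v"
      using meet_sle1[OF vP x0P] .
    ultimately show "v \<in> bwd (fwd F)"
      unfolding transport_def using vP by force
  qed
qed

lemma Tc_ideal_subset_meeting: "U \<in> Tc_ideal D1 \<Longrightarrow> U \<subseteq> {F \<in> spec. F \<inter> D1 \<noteq> {}}"
  unfolding Tc_ideal_def Vset_def by blast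

lemma inj_on_fwd: "inj_on fwd {F \<in> spec. F \<inter> D1 \<noteq> {}}"
  by (rule inj_on_inverseI[where g = bwd]) (use fwd_inverse in blast)

lemma fwd_basic:
  assumes x: "x \<in> D1" and Y: "Y \<subseteq> D1"
  shows "fwd ` basic x Y = basic (\<alpha> x) (\<alpha> ` Y)"
proof
  interpret inv: downset_iso P m z D2 D1 \<beta> \<alpha>
    by (rule downset_iso_sym)
  show "fwd ` basic x Y \<subseteq> basic (\<alpha> x) (\<alpha> ` Y)"
  proof
    fix G assume "G \<in> fwd ` basic x Y"
    then obtain F where F: "F \<in> spec" "x \<in> F" "\<forall>y\<in>Y. y \<notin> F" "G = fwd F"
      unfolding basic_def Vset_def by blast
    then have "G \<in> spec" "\<alpha> x \<in> G" "\<forall>y\<in>Y. \<alpha> y \<notin> G"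
      using fwd_in_spec[OF F(1)] fwd_mem_iff[OF F(1)] x Y by auto
    then show "G \<in> basic (\<alpha> x) (\<alpha> ` Y)"
      unfolding basic_def Vset_def by blast
  qed
  show "basic (\<alpha> x) (\<alpha> ` Y) \<subseteq> fwd ` basic x Y"
  proof
    fix G assume "G \<in> basic (\<alpha> x) (\<alpha> ` Y)"
    then have G: "G \<in> spec" "\<alpha> x \<in> G" "\<forall>y\<in>Y. \<alpha> y \<notin> G"
      unfolding basic_def Vset_def by blast+
    then have Gx: "\<alpha> x \<in> G \<inter> D2"
      using \<alpha>_in[OF x] by blast
    define F where "F = bwd G"
    have F: "F \<in> spec" "fwd F = G"
      unfolding F_def using inv.fwd_in_spec[OF G(1) Gx] inv.fwd_inverse[OF G(1) Gx] by blast+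
    have "x \<in> F"
      using inv.fwd_mem_iff[OF G(1) \<alpha>_in[OF x]] G(2) \<beta>_\<alpha>[OF x] unfolding F_def by simp
    moreover have "\<forall>y\<in>Y. y \<notin> F"
      using fwd_mem_iff[OF F(1)] F(2) G(3) Y by blast
    ultimately show "G \<in> fwd ` basic x Y"
      using F unfolding basic_def Vset_def by blast
  qed
qed

definition image_index :: "'a \<times> 'a set \<Rightarrow> 'a \<times> 'a set" where
  "image_index p = (\<alpha> (fst p), \<alpha> ` snd p)"

lemma fwd_basic_union:
  assumes "\<forall>p\<in>\<B>. basic_index D1 p"
  shows "fwd ` basic_union \<B> = basic_union (image_index ` \<B>)"
  using fwd_basic assms unfolding basic_union_def image_index_def basic_index_def
  by (simp add: image_UN)

lemma fwd_Tc_ideal: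
  assumes "U \<in> Tc_ideal D1"
  shows "fwd ` U \<in> Tc_ideal D2"
proof -
  obtain \<B> where \<B>: "finite \<B>" "\<forall>p\<in>\<B>. basic_index D1 p" "U = basic_union \<B>"
    using Tc_ideal_basic_union[OF down1 assms] by blast
  moreover have "\<forall>p\<in>image_index ` \<B>. basic_index D2 p"
    using \<B>(2) \<alpha>_in unfolding image_index_def basic_index_def by auto
  ultimately show ?thesis
    using fwd_basic_union basic_union_Tc_ideal[OF D2_subset] by simp
qed

definition transport_image :: "'a set set \<Rightarrow> 'a set set" where
  "transport_image U = (if U \<in> Tc_ideal D1 then fwd ` U else {})"

lemma bij_betw_transport_image: "bij_betw transport_image (Tc_ideal D1) (Tc_ideal D2)"
  unfolding bij_betw_def
proof
  interpret inv: downset_iso P m z D2 D1 \<beta> \<alpha>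
    by (rule downset_iso_sym)
  show "inj_on transport_image (Tc_ideal D1)"
  proof (rule inj_onI)
    fix U W assume "U \<in> Tc_ideal D1" "W \<in> Tc_ideal D1" "transport_image U = transport_image W"
    then show "U = W"
      using inj_on_image_eq_iff[OF inj_on_fwd Tc_ideal_subset_meeting Tc_ideal_subset_meeting]
      unfolding transport_image_def by simp
  qed
  show "transport_image ` Tc_ideal D1 = Tc_ideal D2"
  proof
    show "transport_image ` Tc_ideal D1 \<subseteq> Tc_ideal D2"
      using fwd_Tc_ideal unfolding transport_image_def by auto
    show "Tc_ideal D2 \<subseteq> transport_image ` Tc_ideal D1"
    proof
      fix W assume W: "W \<in> Tc_ideal D2"
      have "fwd (bwd G) = G" if "G \<in> W" for G
        using inv.fwd_inverse inv.Tc_ideal_subset_meeting[OF W] that by blast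
      then have "W = transport_image (bwd ` W)"
        using inv.fwd_Tc_ideal[OF W] unfolding transport_image_def by (simp add: image_image)
      then show "W \<in> transport_image ` Tc_ideal D1"
        by (rule rev_image_eqI[OF inv.fwd_Tc_ideal[OF W]])
    qed
  qed
qed

lemma gba_hom_transport_image: "gba_hom (Tc_ideal D1) transport_image"
  unfolding gba_hom_def
proof (intro ballI conjI)
  note meeting = Tc_ideal_subset_meeting
  fix U W assume U: "U \<in> Tc_ideal D1" and W: "W \<in> Tc_ideal D1"
  have "fwd ` (U \<inter> W) = fwd ` U \<inter> fwd ` W"
    using inj_on_image_Int[OF inj_on_fwd meeting[OF U] meeting[OF W]] .
  moreover have "U - W \<subseteq> {F \<in> spec. F \<inter> D1 \<noteq> {}}"
    using meeting[OF U] by blast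
  then have "fwd ` (U - W) = fwd ` U - fwd ` W"
    by (rule inj_on_image_set_diff[OF inj_on_fwd _ meeting[OF W]])
  moreover have "U \<union> W \<in> Tc_ideal D1" "U \<inter> W \<in> Tc_ideal D1" "U - W \<in> Tc_ideal D1"
    using Tc_ideal_Un Tc_ideal_Int Tc_ideal_Diff U W by blast+
  ultimately show "transport_image (U \<union> W) = transport_image U \<union> transport_image W"
    "transport_image (U \<inter> W) = transport_image U \<inter> transport_image W"
    "transport_image (U - W) = transport_image U - transport_image W"
    unfolding transport_image_def using U W by (simp_all add: image_Un)
qed

lemma transport_image_is_iso:
  "bij_betw transport_image (Tc_ideal D1) (Tc_ideal D2) \<and> gba_hom (Tc_ideal D1) transport_image
    \<and> (\<forall>x\<in>D1. transport_image (V x) = V (\<alpha> x)) \<and> (\<forall>U. U \<notin> Tc_ideal D1 \<longrightarrow> transport_image U = {})"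
proof (intro conjI ballI allI impI bij_betw_transport_image gba_hom_transport_image)
  show "transport_image (V x) = V (\<alpha> x)" if "x \<in> D1" for x
    using fwd_basic[of x "{}"] V_in_Tc_ideal[OF D1_subset that] that
    unfolding transport_image_def by (simp add: basic_empty)
  show "transport_image U = {}" if "U \<notin> Tc_ideal D1" for U
    using that unfolding transport_image_def by simp
qed

lemma iso_unique:
  assumes h: "gba_hom (Tc_ideal D1) h" "\<forall>x\<in>D1. h (V x) = V (\<alpha> x)" "\<forall>U. U \<notin> Tc_ideal D1 \<longrightarrow> h U = {}"
  shows "h = transport_image"
proof
  fix U
  show "h U = transport_image U"
  proof (cases "U \<in> Tc_ideal D1")
    case True
    then obtain \<B> where \<B>: "finite \<B>" "\<forall>p\<in>\<B>. basic_index D1 p" "U = basic_union \<B>"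
      using Tc_ideal_basic_union[OF down1] by blast
    have "h U = (\<Union>p\<in>\<B>. h (V (fst p)) - \<Union>((\<lambda>y. h (V y)) ` snd p))"
      using gba_hom_basic_union[OF h(1) _ Tc_ideal_Un Tc_ideal_Diff V_in_Tc_ideal[OF D1_subset] \<B>(1,2)]
        gba_ideal_Tc_ideal \<B>(3) unfolding gba_ideal_def by blast
    also have "\<dots> = (\<Union>p\<in>\<B>. V (\<alpha> (fst p)) - \<Union>(V ` \<alpha> ` snd p))"
    proof (rule SUP_cong[OF refl])
      fix p assume "p \<in> \<B>"
      then have "fst p \<in> D1" "snd p \<subseteq> D1"
        using \<B>(2) by (auto simp: basic_index_def)
      then show "h (V (fst p)) - \<Union>((\<lambda>y. h (V y)) ` snd p) = V (\<alpha> (fst p)) - \<Union>(V ` \<alpha> ` snd p)"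
        using h(2) by (simp add: subset_iff image_image)
    qed
    also have "\<dots> = transport_image U"
      using fwd_basic_union[OF \<B>(2)] True \<B>(3)
      unfolding transport_image_def basic_union_def basic_def image_index_def by simp
    finally show ?thesis .
  next
    case False
    then show ?thesis
      using h(3) transport_image_is_iso by simp
  qed
qed

lemma the_iso_V:
  assumes "x \<in> D1"
  shows "(THE h. bij_betw h (Tc_ideal D1) (Tc_ideal D2) \<and> gba_hom (Tc_ideal D1) h
            \<and> (\<forall>x\<in>D1. h (V x) = V (\<alpha> x)) \<and> (\<forall>U. U \<notin> Tc_ideal D1 \<longrightarrow> h U = {})) (V x)
         = V (\<alpha> x)"
proof -
  have "(THE h. bij_betw h (Tc_ideal D1) (Tc_ideal D2) \<and> gba_hom (Tc_ideal D1) h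
            \<and> (\<forall>x\<in>D1. h (V x) = V (\<alpha> x)) \<and> (\<forall>U. U \<notin> Tc_ideal D1 \<longrightarrow> h U = {}))
        = transport_image"
    by (rule the_equality) (simp_all add: transport_image_is_iso iso_unique)
  then show ?thesis
    using transport_image_is_iso assms by simp
qed

end

section \<open>Inverse semigroups with zero\<close>

locale inv_semigroup0 =
  fixes S :: "'a set" and m :: "'a \<Rightarrow> 'a \<Rightarrow> 'a" and z :: 'a
  assumes inverse_semigroup: "inverse_semigroup_zero S m z"
begin

abbreviation "star \<equiv> sinv S m"
abbreviation "E \<equiv> idem S m"

lemma inverse_semigroup_D:
  shows mult_closed [simp]: "a \<in> S \<Longrightarrow> b \<in> S \<Longrightarrow> m a b \<in> S"
    and mult_assoc: "a \<in> S \<Longrightarrow> b \<in> S \<Longrightarrow> c \<in> S \<Longrightarrow> m (m a b) c = m a (m b c)"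
    and zero_in [simp]: "z \<in> S"
    and zero_mult [simp]: "a \<in> S \<Longrightarrow> m z a = z"
    and mult_zero [simp]: "a \<in> S \<Longrightarrow> m a z = z"
    and star_ex1: "a \<in> S \<Longrightarrow> \<exists>!b. b \<in> S \<and> m (m a b) a = a \<and> m (m b a) b = b"
proof -
  note D = inverse_semigroup[unfolded inverse_semigroup_zero_def]
  show "a \<in> S \<Longrightarrow> b \<in> S \<Longrightarrow> m a b \<in> S"
    using D[THEN conjunct1] by blast
  show "a \<in> S \<Longrightarrow> b \<in> S \<Longrightarrow> c \<in> S \<Longrightarrow> m (m a b) c = m a (m b c)"
    using D[THEN conjunct2, THEN conjunct1] by blast
  show "z \<in> S"
    using D[THEN conjunct2, THEN conjunct2, THEN conjunct1] .
  show "a \<in> S \<Longrightarrow> m z a = z" "a \<in> S \<Longrightarrow> m a z = z"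
    using D[THEN conjunct2, THEN conjunct2, THEN conjunct2, THEN conjunct1] by blast+
  show "a \<in> S \<Longrightarrow> \<exists>!b. b \<in> S \<and> m (m a b) a = a \<and> m (m b a) b = b"
    using D[THEN conjunct2, THEN conjunct2, THEN conjunct2, THEN conjunct2] by blast
qed

lemma star_props:
  assumes "a \<in> S"
  shows "star a \<in> S" "m (m a (star a)) a = a" "m (m (star a) a) (star a) = star a"
  using theI'[OF star_ex1[OF assms]] unfolding sinv_def by blast+

lemma star_in[simp]: "a \<in> S \<Longrightarrow> star a \<in> S"
  using star_props by blast

lemma mult_star_mult[simp]: "a \<in> S \<Longrightarrow> m a (m (star a) a) = a"
  using star_props(2) mult_assoc[of a "star a" a] by simp
lemma star_mult_star[simp]: "a \<in> S \<Longrightarrow> m (star a) (m a (star a)) = star a"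
  using star_props(3) mult_assoc[of "star a" a "star a"] by simp

lemma mult_star_mult_left[simp]: "a \<in> S \<Longrightarrow> t \<in> S \<Longrightarrow> m a (m (star a) (m a t)) = m a t"
  using mult_assoc[of a "m (star a) a" t] mult_assoc[of "star a" a t] by simp

lemma star_mult_star_left[simp]: "a \<in> S \<Longrightarrow> t \<in> S \<Longrightarrow> m (star a) (m a (m (star a) t)) = m (star a) t"
  using mult_assoc[of "star a" "m a (star a)" t] mult_assoc[of a "star a" t] by simp

lemma star_unique:
  assumes "a \<in> S" "b \<in> S" "m (m a b) a = a" "m (m b a) b = b"
  shows "star a = b"
  unfolding sinv_def using the1_equality[OF star_ex1[OF assms(1)]] assms by blast

lemma star_star[simp]: "a \<in> S \<Longrightarrow> star (star a) = a"
  using star_unique[of "star a" a] star_props by simp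

lemma idem_in_S: "e \<in> E \<Longrightarrow> e \<in> S"
  unfolding idem_def by blast

lemma idem_mult_idem: "e \<in> E \<Longrightarrow> t \<in> S \<Longrightarrow> m e (m e t) = m e t"
  using mult_assoc[of e e t] unfolding idem_def by simp

lemma star_idem: "e \<in> E \<Longrightarrow> star e = e"
  using star_unique[of e e] unfolding idem_def by simp

lemma zero_idem: "z \<in> E" unfolding idem_def by simp

text \<open>With x = (e f)*, the element f x e is another inverse of e f, so it equals x; it is
  idempotent, hence so are x and e f = x*.\<close>

lemma idem_mult_closed [simp]:
  assumes e: "e \<in> E" and f: "f \<in> E"
  shows "m e f \<in> E"
proof -
  have eS: "e \<in> S" and fS: "f \<in> S" using e f idem_in_S by auto
  have ee: "m e e = e" and ff: "m f f = f" using e f unfolding idem_def by auto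
  define x where "x = star (m e f)"
  have xS: "x \<in> S" unfolding x_def using eS fS by simp
  define y where "y = m f (m x e)"
  have yS: "y \<in> S" unfolding y_def using xS eS fS by simp
  have i1: "m (m e f) (m x (m e f)) = m e f" using mult_star_mult[of "m e f"] eS fS unfolding x_def by (simp add: mult_assoc)
  have i2: "m x (m (m e f) x) = x" using star_mult_star[of "m e f"] eS fS unfolding x_def by (simp add: mult_assoc)
  have "m (m (m e f) y) (m e f) = m e (m f (m x (m e f)))"
    unfolding y_def using eS fS xS by (simp add: mult_assoc idem_mult_idem[OF e] idem_mult_idem[OF f] ee ff)
  also have "\<dots> = m e f" using i1 eS fS xS by (simp add: mult_assoc)
  finally have c1: "m (m (m e f) y) (m e f) = m e f" .
  have "m (m y (m e f)) y = m f (m (m x (m (m e f) x)) e)"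
    unfolding y_def using eS fS xS by (simp add: mult_assoc idem_mult_idem[OF e] idem_mult_idem[OF f] ee ff)
  also have "\<dots> = y" using i2 unfolding y_def by simp
  finally have c2: "m (m y (m e f)) y = y" .
  have xy: "x = y" unfolding x_def using star_unique[OF _ yS c1 c2] eS fS by simp
  have "m x x = m y y" by (simp add: xy)
  also have "\<dots> = m f (m (m x (m (m e f) x)) e)"
    unfolding y_def using eS fS xS by (simp add: mult_assoc)
  finally have "m x x = m f (m (m x (m (m e f) x)) e)" .
  also have "\<dots> = x" using i2 xy unfolding y_def by simp
  finally have "x \<in> E" using xS unfolding idem_def by simp
  then have "star x = x" by (rule star_idem)
  then have "m e f = x" unfolding x_def using eS fS by simp
  then show ?thesis using \<open>x \<in> E\<close> by simp
qed

text \<open>f e is an inverse of the idempotent e f.\<close>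

lemma idem_commute:
  assumes e: "e \<in> E" and f: "f \<in> E"
  shows "m e f = m f e"
proof -
  have eS: "e \<in> S" and fS: "f \<in> S" using e f idem_in_S by auto
  have ef: "m e f \<in> E" and fe: "m f e \<in> E" using idem_mult_closed e f by auto
  have ee: "m e e = e" and ff: "m f f = f" using e f unfolding idem_def by auto
  have efef: "m e (m f (m e f)) = m e f" using ef eS fS unfolding idem_def by (simp add: mult_assoc)
  have fefe: "m f (m e (m f e)) = m f e" using fe eS fS unfolding idem_def by (simp add: mult_assoc)
  have c1: "m (m (m e f) (m f e)) (m e f) = m e f"
    using eS fS efef by (simp add: mult_assoc idem_mult_idem[OF f] idem_mult_idem[OF e] ee ff)
  have c2: "m (m (m f e) (m e f)) (m f e) = m f e"
    using eS fS fefe by (simp add: mult_assoc idem_mult_idem[OF f] idem_mult_idem[OF e] ee ff)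
  have "star (m e f) = m f e" using star_unique[OF _ _ c1 c2] eS fS by simp
  then show ?thesis using star_idem[OF ef] by simp
qed

lemma idem_left_commute: "e \<in> E \<Longrightarrow> f \<in> E \<Longrightarrow> t \<in> S \<Longrightarrow> m e (m f t) = m f (m e t)"
proof -
  assume e: "e \<in> E" and f: "f \<in> E" and t: "t \<in> S"
  have "m e (m f t) = m (m e f) t" using mult_assoc e f t idem_in_S by simp
  also have "\<dots> = m (m f e) t" using idem_commute[OF e f] by simp
  also have "\<dots> = m f (m e t)" using mult_assoc e f t idem_in_S by simp
  finally show ?thesis .
qed

lemma mult_star_idem[simp]: "a \<in> S \<Longrightarrow> m a (star a) \<in> E"
  unfolding idem_def using mult_star_mult by (simp add: mult_assoc)
lemma star_mult_idem[simp]: "a \<in> S \<Longrightarrow> m (star a) a \<in> E"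
  unfolding idem_def using star_mult_star by (simp add: mult_assoc)

lemma star_mult:
  assumes a: "a \<in> S" and b: "b \<in> S"
  shows "star (m a b) = m (star b) (star a)"
proof (rule star_unique)
  show "m a b \<in> S" "m (star b) (star a) \<in> S" using a b by simp_all
  have c: "m (m b (star b)) (m (star a) a) = m (m (star a) a) (m b (star b))" using idem_commute a b by simp
  have "m (m (m a b) (m (star b) (star a))) (m a b) = m a (m (m (m b (star b)) (m (star a) a)) b)"
    using a b by (simp add: mult_assoc)
  also have "\<dots> = m a (m (m (m (star a) a) (m b (star b))) b)" using c by simp
  also have "\<dots> = m a b" using a b by (simp add: mult_assoc)
  finally show "m (m (m a b) (m (star b) (star a))) (m a b) = m a b" .
  have "m (m (m (star b) (star a)) (m a b)) (m (star b) (star a)) = m (star b) (m (m (m (star a) a) (m b (star b))) (star a))"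
    using a b by (simp add: mult_assoc)
  also have "\<dots> = m (star b) (m (m (m b (star b)) (m (star a) a)) (star a))" using c by simp
  also have "\<dots> = m (star b) (star a)" using a b by (simp add: mult_assoc)
  finally show "m (m (m (star b) (star a)) (m a b)) (m (star b) (star a)) = m (star b) (star a)" .
qed

lemma nle_idem_iff: "x \<in> E \<Longrightarrow> y \<in> E \<Longrightarrow> nle S m x y \<longleftrightarrow> m x y = x"
proof
  assume xy: "x \<in> E" "y \<in> E" "nle S m x y"
  then obtain e where e: "e \<in> E" "x = m e y" unfolding nle_def by blast
  have yy: "m y y = y" using xy unfolding idem_def by blast
  have "m x y = m e (m y y)" using e xy idem_in_S mult_assoc by simp
  then show "m x y = x" using yy e by simp
next
  assume xy: "x \<in> E" "y \<in> E" "m x y = x"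
  then show "nle S m x y" unfolding nle_def by (intro bexI[of _ x]) simp_all
qed

lemma zero_semilattice_idem: "zero_semilattice E m z"
proof (rule zero_semilattice.intro)
  fix a b c assume "a \<in> E" "b \<in> E" "c \<in> E"
  then show "m (m a b) c = m a (m b c)" using mult_assoc idem_in_S by simp
next
  fix a b assume "a \<in> E" "b \<in> E"
  then show "m a b \<in> E" by simp
next
  fix a b assume "a \<in> E" "b \<in> E"
  then show "m a b = m b a" using idem_commute by simp
next
  fix a assume "a \<in> E" then show "m a a = a" unfolding idem_def by blast
next
  fix a assume "a \<in> E" then show "m z a = z" using idem_in_S by simp
next
  show "z \<in> E" by (rule zero_idem)
qed

end

sublocale inv_semigroup0 \<subseteq> E: zero_semilattice E m z
  by (rule zero_semilattice_idem)

context inv_semigroup0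
begin

lemma conj_idem:
  assumes e: "e \<in> E" and t: "t \<in> S"
  shows "m t (m e (star t)) \<in> E"
proof -
  have eS: "e \<in> S"
    using e by (rule idem_in_S)
  have "m e (m (m (star t) t) (m e (star t))) = m (m (star t) t) (m e (star t))"
    using idem_left_commute[OF e star_mult_idem[OF t]] idem_mult_idem[OF e] t eS by simp
  then show ?thesis
    using t eS unfolding idem_def by (simp add: mult_assoc)
qed

lemma idem_below_range:
  assumes w: "w \<in> S" "nle S m w s" "s \<in> S" and c: "c \<in> S" and p: "m w c \<in> E"
  shows "sle m (m w c) (m s (star s))"
proof -
  obtain f where f: "f \<in> E" "w = m f s"
    using w(2) unfolding nle_def by blast
  define k where "k = m s (star s)"
  have fS: "f \<in> S" and k: "k \<in> E" "k \<in> S"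
    using f(1) w(3) idem_in_S unfolding k_def by auto
  have "star w = m (star s) f"
    using star_mult[OF fS w(3)] star_idem[OF f(1)] f(2) by simp
  then have "m w (star w) = m f (m k f)"
    unfolding k_def using f(2) fS w(3) by (simp add: mult_assoc)
  also have "\<dots> = m f k"
    using idem_commute[OF k(1) f(1)] idem_mult_idem[OF f(1) k(2)] by simp
  finally have ww: "m w (star w) = m f k" .
  have "m (m w (star w)) (m w c) = m w c"
    using w(1) c by (simp add: mult_assoc)
  then have "m (m f k) (m w c) = m w c"
    using ww by simp
  then have "sle m (m w c) (m f k)"
    using E.commute[OF p idem_mult_closed[OF f(1) k(1)]] unfolding sle_def by simp
  then show ?thesis
    using E.sle_trans[OF p _ k(1) _ E.meet_sle2[OF f(1) k(1)]] idem_mult_closed[OF f(1) k(1)]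
    unfolding k_def by blast
qed

lemma idem_mult_range_in_Ekg:
  assumes x: "x \<in> E" and s: "s \<in> S" "s \<noteq> z" "\<phi> s = g"
  shows "m x (m s (star s)) \<in> Ekg S m z \<phi> g"
proof -
  have "m x (m s (star s)) \<in> E"
    using idem_mult_closed[OF x mult_star_idem[OF s(1)]] .
  moreover have "m (m x (m s (star s))) (m s (star s)) = m x (m s (star s))"
    using mult_assoc[of x "m s (star s)" "m s (star s)"] idem_in_S[OF x] s(1)
      mult_star_idem[OF s(1)] unfolding idem_def by simp
  ultimately show ?thesis
    unfolding Ekg_def using nle_idem_iff mult_star_idem s by blast
qed

end

lemma sinv_subsemigroup:
  assumes "inverse_semigroup_zero S1 m z" "inverse_semigroup_zero S2 m z" "S1 \<subseteq> S2" "s \<in> S1"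
  shows "sinv S1 m s = sinv S2 m s"
proof -
  interpret I1: inv_semigroup0 S1 m z by (rule inv_semigroup0.intro) fact
  interpret I2: inv_semigroup0 S2 m z by (rule inv_semigroup0.intro) fact
  have "sinv S1 m s \<in> S2" "s \<in> S2"
    using I1.star_in[of s] assms(3,4) by blast+
  then show ?thesis
    using I2.star_unique[of s "sinv S1 m s"] I1.star_props(2,3)[OF assms(4)] by simp
qed

locale graded_inv_semigroup0 = inv_semigroup0 S m z for S m z +
  fixes \<phi> :: "'a \<Rightarrow> 'g::group_add"
  assumes grading: "grading S m z \<phi>"
begin

lemma degree_zero_iff: "s \<in> S \<Longrightarrow> s \<noteq> z \<Longrightarrow> \<phi> s = 0 \<longleftrightarrow> s \<in> E"
proof -
  assume s: "s \<in> S" "s \<noteq> z"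
  have eq: "{s \<in> S. s \<noteq> z \<and> \<phi> s = 0} = idem S m - {z}" using grading unfolding grading_def by (elim conjE)
  show ?thesis
  proof
    assume "\<phi> s = 0" then have "s \<in> {s \<in> S. s \<noteq> z \<and> \<phi> s = 0}" using s by blast
    then show "s \<in> E" unfolding eq by blast
  next
    assume "s \<in> E" then have "s \<in> idem S m - {z}" using s by blast
    then show "\<phi> s = 0" unfolding eq[symmetric] by blast
  qed
qed

lemma degree_mult: "a \<in> S \<Longrightarrow> b \<in> S \<Longrightarrow> m a b \<noteq> z \<Longrightarrow> \<phi> (m a b) = \<phi> a + \<phi> b"
  using grading unfolding grading_def by blast

lemma degree_idem: "e \<in> E \<Longrightarrow> e \<noteq> z \<Longrightarrow> \<phi> e = 0"
  using degree_zero_iff idem_in_S by blast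

lemma star_nonzero: "s \<in> S \<Longrightarrow> s \<noteq> z \<Longrightarrow> star s \<noteq> z"
proof
  assume s: "s \<in> S" "s \<noteq> z" and e: "star s = z"
  have "s = m s (m (star s) s)" using mult_star_mult[OF s(1)] by simp
  also have "\<dots> = z" using e s by simp
  finally show False using s by simp
qed

lemma mult_star_nonzero: "s \<in> S \<Longrightarrow> s \<noteq> z \<Longrightarrow> m s (star s) \<noteq> z"
proof
  assume s: "s \<in> S" "s \<noteq> z" and e: "m s (star s) = z"
  have "s = m (m s (star s)) s" using mult_star_mult[OF s(1)] mult_assoc[of s "star s" s] s by simp
  then show False using e s by simp
qed

lemma degree_star: "s \<in> S \<Longrightarrow> s \<noteq> z \<Longrightarrow> \<phi> (star s) = - \<phi> s"
proof -
  assume s: "s \<in> S" "s \<noteq> z"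
  have "\<phi> (m s (star s)) = 0" using degree_idem[OF mult_star_idem[OF s(1)] mult_star_nonzero[OF s]] .
  moreover have "\<phi> (m s (star s)) = \<phi> s + \<phi> (star s)" using degree_mult[OF s(1) star_in[OF s(1)] mult_star_nonzero[OF s]] .
  ultimately show ?thesis using minus_unique[of "\<phi> s" "\<phi> (star s)"] by simp
qed

text \<open>a b* and b a* have degree 0, so strong E*-unitarity makes them idempotents.\<close>

lemma eq_if_same_degree_source:
  assumes a: "a \<in> S" "a \<noteq> z" and b: "b \<in> S" "b \<noteq> z" and ab: "\<phi> a = \<phi> b"
    and src: "m (star a) a = m (star b) b"
  shows "a = b"
proof -
  define f where "f = m a (star b)"
  define g where "g = m b (star a)"
  have fg: "f \<in> S" "g \<in> S"
    unfolding f_def g_def using a b by auto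
  have fb: "m f b = a"
    unfolding f_def using a b src mult_star_mult[of a] by (simp add: mult_assoc)
  have ga: "m g a = b"
    unfolding g_def using a b src mult_star_mult[of b] by (simp add: mult_assoc)
  have "f \<noteq> z" "g \<noteq> z"
    using fb ga a b by auto
  then have "\<phi> f = 0" "\<phi> g = 0"
    using degree_mult[of a "star b"] degree_mult[of b "star a"] degree_star a b ab
    unfolding f_def g_def by simp_all
  then have fE: "f \<in> E" and gE: "g \<in> E"
    using degree_zero_iff fg \<open>f \<noteq> z\<close> \<open>g \<noteq> z\<close> by blast+
  have "b = m g (m f (m g a))" using ga fb by simp
  also have "\<dots> = m g (m g (m f a))" using idem_left_commute[OF fE gE a(1)] by simp
  also have "\<dots> = m g (m f a)" using idem_mult_idem[OF gE] fE a idem_in_S by simp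
  also have "\<dots> = m f (m g a)" using idem_left_commute[OF fE gE a(1)] by simp
  also have "\<dots> = a" using ga fb by simp
  finally show ?thesis by simp
qed

lemma restriction_eq:
  assumes s: "s \<in> S" "s \<noteq> z" and t: "t \<in> S" "t \<noteq> z" and st: "\<phi> s = \<phi> t"
    and e: "e \<in> E" and es: "m e (m (star s) s) = e" and et: "m e (m (star t) t) = e"
  shows "m s e = m t e"
proof (cases "e = z")
  case True
  then show ?thesis using s t by simp
next
  case False
  have eS: "e \<in> S" and ee: "m e e = e"
    using e unfolding idem_def by blast+
  have src: "m (star (m u e)) (m u e) = e" if "u \<in> S" "m e (m (star u) u) = e" for u
  proof -
    have "m (star (m u e)) (m u e) = m e (m (m (star u) u) e)"
      using star_mult[OF that(1) eS] star_idem[OF e] that(1) eS by (simp add: mult_assoc)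
    also have "\<dots> = e"
      using idem_commute[OF star_mult_idem[OF that(1)] e] that idem_mult_idem[OF e] eS ee by simp
    finally show ?thesis .
  qed
  have "m u e \<noteq> z" "\<phi> (m u e) = \<phi> u" if "u \<in> S" "m e (m (star u) u) = e" for u
  proof -
    show "m u e \<noteq> z"
    proof
      assume "m u e = z"
      then show False
        using src[OF that] False by simp
    qed
    then show "\<phi> (m u e) = \<phi> u"
      using degree_mult[OF that(1) eS] degree_idem[OF e False] by simp
  qed
  then show ?thesis
    using eq_if_same_degree_source[of "m s e" "m t e"] src s t es et st eS by simp
qed

lemma phikg_eq:
  assumes x: "x \<in> E" and t: "t \<in> S" "t \<noteq> z" "\<phi> t = g" and xt: "m x (m (star t) t) = x"
  shows "phikg S m z \<phi> g x = m t (m x (star t))"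
proof -
  have xS: "x \<in> S" using x idem_in_S by blast
  have nt: "nle S m x (m (star t) t)" using nle_idem_iff[OF x star_mult_idem[OF t(1)]] xt by simp
  have ex: "\<exists>s. s \<in> S \<and> s \<noteq> z \<and> \<phi> s = g \<and> nle S m x (m (star s) s)" using t nt by blast
  define s where "s = (SOME s. s \<in> S \<and> s \<noteq> z \<and> \<phi> s = g \<and> nle S m x (m (star s) s))"
  have s: "s \<in> S" "s \<noteq> z" "\<phi> s = g" "nle S m x (m (star s) s)"
    using someI_ex[OF ex] unfolding s_def by blast+
  have xs: "m x (m (star s) s) = x" using nle_idem_iff[OF x star_mult_idem[OF s(1)]] s(4) by simp
  have eq: "m s x = m t x" using restriction_eq[OF s(1,2) t(1,2) _ x xs xt] s(3) t(3) by simp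
  have k: "m (m u x) (star u) = m (m u x) (star (m u x))" if "u \<in> S" for u
    using star_mult[OF that xS] star_idem[OF x] xS that by (simp add: mult_assoc idem_mult_idem[OF x])
  have "phikg S m z \<phi> g x = m (m s x) (star s)" unfolding phikg_def Let_def s_def by simp
  also have "\<dots> = m (m t x) (star t)" using k[OF s(1)] k[OF t(1)] eq by simp
  finally show ?thesis using t xS by (simp add: mult_assoc)
qed

lemma Ekg_iff: "x \<in> Ekg S m z \<phi> g \<longleftrightarrow> x \<in> E \<and> (\<exists>s\<in>S. s \<noteq> z \<and> \<phi> s = g \<and> m x (m s (star s)) = x)"
  unfolding Ekg_def using nle_idem_iff mult_star_idem by blast

lemma Ekg_idem: "x \<in> Ekg S m z \<phi> g \<Longrightarrow> x \<in> E"
  unfolding Ekg_iff by blast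

lemma Ekg_down: "x \<in> Ekg S m z \<phi> g \<Longrightarrow> y \<in> E \<Longrightarrow> m y x = y \<Longrightarrow> y \<in> Ekg S m z \<phi> g"
proof -
  assume x: "x \<in> Ekg S m z \<phi> g" and y: "y \<in> E" and yx: "m y x = y"
  obtain s where s: "s \<in> S" "s \<noteq> z" "\<phi> s = g" "m x (m s (star s)) = x" using x unfolding Ekg_iff by blast
  have xS: "x \<in> S" "y \<in> S" using x y Ekg_idem idem_in_S by auto
  have "m y (m s (star s)) = m (m y x) (m s (star s))" using yx by simp
  also have "\<dots> = m y (m x (m s (star s)))" using xS s by (simp add: mult_assoc)
  also have "\<dots> = y" using s yx by simp
  finally show ?thesis unfolding Ekg_iff using y s by blast
qed

lemma mult_absorb: "x \<in> S \<Longrightarrow> t \<in> S \<Longrightarrow> w \<in> S \<Longrightarrow> m x (m (star t) t) = x \<Longrightarrow> m x (m (star t) (m t w)) = m x w"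
proof -
  assume h: "x \<in> S" "t \<in> S" "w \<in> S" "m x (m (star t) t) = x"
  have "m (m x (m (star t) t)) w = m x (m (star t) (m t w))" using h(1-3) by (simp add: mult_assoc)
  then show ?thesis using h(4) by simp
qed

lemma phikg_props:
  assumes x: "x \<in> Ekg S m z \<phi> (-g)"
  shows "phikg S m z \<phi> g x \<in> Ekg S m z \<phi> g" "phikg S m z \<phi> (-g) (phikg S m z \<phi> g x) = x"
    "\<exists>t\<in>S. t \<noteq> z \<and> \<phi> t = g \<and> m x (m (star t) t) = x \<and> phikg S m z \<phi> g x = m t (m x (star t))"
proof -
  obtain u where u: "u \<in> S" "u \<noteq> z" "\<phi> u = -g" "m x (m u (star u)) = x" using x unfolding Ekg_iff by blast
  have xE: "x \<in> E" using x Ekg_idem by blast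
  have xS: "x \<in> S" using xE idem_in_S by blast
  have xx: "m x x = x" using xE unfolding idem_def by blast
  define t where "t = star u"
  have t: "t \<in> S" "t \<noteq> z" "\<phi> t = g" unfolding t_def using u star_nonzero degree_star by auto
  have tu: "star t = u" unfolding t_def using u by simp
  have xt: "m x (m (star t) t) = x" using u tu unfolding t_def by simp
  have ph: "phikg S m z \<phi> g x = m t (m x (star t))" using phikg_eq[OF xE t(1,2,3) xt] .
  then show "\<exists>t\<in>S. t \<noteq> z \<and> \<phi> t = g \<and> m x (m (star t) t) = x \<and> phikg S m z \<phi> g x = m t (m x (star t))"
    using t xt by blast
  define y where "y = m t (m x (star t))"
  have yS: "y \<in> S" unfolding y_def using t xS by simp
  have "m y y = m t (m x (m (star t) (m t (m x (star t)))))" unfolding y_def using t xS by (simp add: mult_assoc)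
  also have "\<dots> = m t (m x (m x (star t)))" using mult_absorb[OF xS t(1) _ xt] t xS by simp
  also have "\<dots> = y" unfolding y_def using idem_mult_idem[OF xE] t by simp
  finally have yE: "y \<in> E" using yS unfolding idem_def by blast
  have "m y (m t (star t)) = m t (m x (m (star t) (m t (star t))))" unfolding y_def using t xS by (simp add: mult_assoc)
  also have "\<dots> = y" unfolding y_def using t by simp
  finally have yt: "m y (m t (star t)) = y" .
  show "phikg S m z \<phi> g x \<in> Ekg S m z \<phi> g" unfolding ph y_def[symmetric] Ekg_iff using yE t yt by blast
  have t2: "star t \<in> S" "star t \<noteq> z" "\<phi> (star t) = -g" using t star_nonzero degree_star by auto
  have yt2: "m y (m (star (star t)) (star t)) = y" using yt t by simp
  have "phikg S m z \<phi> (-g) y = m (star t) (m y (star (star t)))" using phikg_eq[OF yE t2 yt2] .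
  also have "\<dots> = m (star t) (m t (m x (m (star t) t)))" unfolding y_def using t xS by (simp add: mult_assoc)
  also have "\<dots> = m (star t) (m t x)" using xt by simp
  also have "\<dots> = m (m (star t) t) x" using t xS by (simp add: mult_assoc)
  also have "\<dots> = m x (m (star t) t)" using idem_commute[OF star_mult_idem[OF t(1)] xE] by simp
  also have "\<dots> = x" using xt .
  finally show "phikg S m z \<phi> (-g) (phikg S m z \<phi> g x) = x" unfolding ph y_def .
qed

lemma phikg_mono:
  assumes x: "x \<in> Ekg S m z \<phi> (-g)" and y: "y \<in> Ekg S m z \<phi> (-g)" and xy: "m x y = x"
  shows "m (phikg S m z \<phi> g x) (phikg S m z \<phi> g y) = phikg S m z \<phi> g x"
proof -
  obtain t where t: "t \<in> S" "t \<noteq> z" "\<phi> t = g" "m y (m (star t) t) = y" "phikg S m z \<phi> g y = m t (m y (star t))"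
    using phikg_props(3)[OF y] by blast
  have xE: "x \<in> E" and yE: "y \<in> E" using x y Ekg_idem by auto
  have xS: "x \<in> S" "y \<in> S" using xE yE idem_in_S by auto
  have xt: "m x (m (star t) t) = x"
  proof -
    have "m x (m (star t) t) = m (m x y) (m (star t) t)" using xy by simp
    also have "\<dots> = m x (m y (m (star t) t))" using xS t by (simp add: mult_assoc)
    finally show ?thesis using t xy by simp
  qed
  have px: "phikg S m z \<phi> g x = m t (m x (star t))" using phikg_eq[OF xE t(1,2,3) xt] .
  have "m (m t (m x (star t))) (m t (m y (star t))) = m t (m x (m (star t) (m t (m y (star t)))))"
    using t xS by (simp add: mult_assoc)
  also have "\<dots> = m t (m x (m y (star t)))" using mult_absorb[OF xS(1) t(1) _ xt] t xS by simp
  also have "\<dots> = m t (m (m x y) (star t))" using t xS by (simp add: mult_assoc)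
  finally show ?thesis using px t xy by simp
qed

lemma degree_idem_sandwich:
  assumes x: "x \<in> E" and y: "y \<in> E" and t: "t \<in> S" and nz: "m (m x t) y \<noteq> z"
  shows "\<phi> (m (m x t) y) = \<phi> t"
proof -
  have S: "x \<in> S" "y \<in> S" "m x t \<in> S"
    using x y t idem_in_S by auto
  have "m x t \<noteq> z"
  proof
    assume "m x t = z"
    with nz S(2) show False by simp
  qed
  moreover have "y \<noteq> z"
  proof
    assume "y = z"
    with nz S(3) show False by simp
  qed
  moreover from calculation have "x \<noteq> z"
    using t by auto
  ultimately show ?thesis
    using degree_mult[OF S(3) S(2) nz] degree_mult[OF S(1) t] degree_idem x y by simp
qed

lemma nle_degree:
  assumes "nle S m w s" "w \<in> S" "s \<in> S" "w \<noteq> z"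
  shows "s \<noteq> z" "\<phi> s = \<phi> w"
proof -
  obtain f where f: "f \<in> E" "w = m f s"
    using assms(1) unfolding nle_def by blast
  then have "f \<in> S" "f \<noteq> z"
    using idem_in_S assms by auto
  then show "s \<noteq> z" "\<phi> s = \<phi> w"
    using f assms degree_mult[of f s] degree_idem[OF f(1)] by auto
qed

lemma downset_iso_Ekg:
  "downset_iso E m z (Ekg S m z \<phi> (-g)) (Ekg S m z \<phi> g) (phikg S m z \<phi> g) (phikg S m z \<phi> (-g))"
proof -
  have "E.down_closed (Ekg S m z \<phi> h)" for h
    unfolding E.down_closed_def sle_def using Ekg_idem Ekg_down by blast
  moreover have "x \<in> Ekg S m z \<phi> g \<Longrightarrow> y \<in> Ekg S m z \<phi> g \<Longrightarrow> sle m x y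
      \<Longrightarrow> sle m (phikg S m z \<phi> (-g) x) (phikg S m z \<phi> (-g) y)" for x y
    unfolding sle_def using phikg_mono[of x "-g" y] by simp
  moreover have "x \<in> Ekg S m z \<phi> g \<Longrightarrow> phikg S m z \<phi> (-g) x \<in> Ekg S m z \<phi> (-g)"
    "x \<in> Ekg S m z \<phi> g \<Longrightarrow> phikg S m z \<phi> g (phikg S m z \<phi> (-g) x) = x" for x
    using phikg_props(1,2)[of x "-g"] by simp_all
  ultimately show ?thesis
    using phikg_props(1,2)[of _ g] phikg_mono[of _ g]
    by (intro downset_iso.intro zero_semilattice_idem downset_iso_axioms.intro) (auto simp: sle_def)
qed

end


section \<open>The embedding and the partial action on compact open sets\<close>

lemma iota_V_idem:
  assumes "inverse_semigroup_zero S1 m z" "inverse_semigroup_zero S2 m z" "cover_sub S1 S2 m z"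
    and "e \<in> idem S1 m"
  shows "iota S1 S2 m z (Vset (idem S1 m) m z e) = Vset (idem S2 m) m z e"
proof -
  interpret I1: inv_semigroup0 S1 m z by (rule inv_semigroup0.intro) fact
  interpret I2: inv_semigroup0 S2 m z by (rule inv_semigroup0.intro) fact
  interpret emb: cover_embedding "idem S1 m" "idem S2 m" m z
  proof (intro cover_embedding.intro cover_embedding_axioms.intro I1.zero_semilattice_idem I2.zero_semilattice_idem)
    show "idem S1 m \<subseteq> idem S2 m"
      using assms(3) unfolding cover_sub_def inverse_subsemigroup_def idem_def by blast
    show "\<And>x C. x \<in> idem S1 m \<Longrightarrow> is_cover (idem S1 m) m z x C \<Longrightarrow> is_cover (idem S2 m) m z x C"
      using assms(3) unfolding cover_sub_def by blast
  qed
  have "iota S1 S2 m z = iota (idem S1 m) (idem S2 m) m z"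
    unfolding iota_def I1.E.idem_eq I2.E.idem_eq ..
  then show ?thesis
    using emb.iota_V[OF assms(4)] by simp
qed

context graded_inv_semigroup0
begin

lemma TcE_eq_Tc_ideal: "TcE S m z \<phi> g = E.Tc_ideal (Ekg S m z \<phi> g)"
proof -
  interpret iso: downset_iso E m z "Ekg S m z \<phi> (-g)" "Ekg S m z \<phi> g" "phikg S m z \<phi> g" "phikg S m z \<phi> (-g)"
    by (rule downset_iso_Ekg)
  show ?thesis
    unfolding TcE_def using E.ideal_gen_V_eq_Tc_ideal[OF iso.down2] by simp
qed

lemma phit_V:
  assumes "x \<in> Ekg S m z \<phi> (-g)"
  shows "phit S m z \<phi> g (E.V x) = E.V (phikg S m z \<phi> g x)"
proof -
  interpret iso: downset_iso E m z "Ekg S m z \<phi> (-g)" "Ekg S m z \<phi> g" "phikg S m z \<phi> g" "phikg S m z \<phi> (-g)"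
    by (rule downset_iso_Ekg)
  show ?thesis
    unfolding phit_def TcE_eq_Tc_ideal using iso.the_iso_V[OF assms] .
qed

lemma V_Int_phit:
  assumes x: "x \<in> E" and y: "y \<in> E" and a: "a \<in> Ekg S m z \<phi> (-g)"
  obtains t where "t \<in> S" "t \<noteq> z" "\<phi> t = g"
    "E.V x \<inter> phit S m z \<phi> g (E.V y \<inter> E.V a) = E.V (m x (m t (m (m y a) (star t))))"
proof -
  have aE: "a \<in> E"
    using a Ekg_idem by blast
  then have aS: "a \<in> S" "m a a = a"
    unfolding idem_def by blast+
  have yaE: "m y a \<in> E"
    using idem_mult_closed[OF y aE] .
  have "m (m y a) a = m y a"
    using mult_assoc[OF idem_in_S[OF y] aS(1) aS(1)] aS(2) by simp
  then have ya: "m y a \<in> Ekg S m z \<phi> (-g)"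
    by (rule Ekg_down[OF a yaE])
  obtain t where t: "t \<in> S" "t \<noteq> z" "\<phi> t = g"
    and q: "phikg S m z \<phi> g (m y a) = m t (m (m y a) (star t))"
    using phikg_props(3)[OF ya] by blast
  have "E.V x \<inter> phit S m z \<phi> g (E.V y \<inter> E.V a) = E.V x \<inter> E.V (m t (m (m y a) (star t)))"
    using phit_V[OF ya] E.V_Int[OF y aE] q by simp
  also have "\<dots> = E.V (m x (m t (m (m y a) (star t))))"
    using E.V_Int[OF x conj_idem[OF yaE t(1)]] .
  finally show ?thesis
    using that t by blast
qed

lemma idem_below_Ekg_subsemigroup:
  assumes S1: "inverse_semigroup_zero S1 m z" "S1 \<subseteq> S"
    and bound: "\<forall>x\<in>idem S1 m. \<forall>y\<in>idem S1 m. \<forall>s\<in>S. \<exists>s'\<in>S1. nle S m (m (m x s) y) s'"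
    and x: "x \<in> idem S1 m" and y: "y \<in> idem S1 m" and a: "a \<in> E" and t: "t \<in> S" "\<phi> t = g"
    and p: "p = m x (m t (m (m y a) (star t)))" "p \<noteq> z"
  shows "\<exists>e\<in>Ekg S1 m z \<phi> g. sle m p e"
proof -
  interpret I1: inv_semigroup0 S1 m z by (rule inv_semigroup0.intro) fact
  have xy: "x \<in> E" "y \<in> E"
    using x y S1(2) unfolding idem_def by auto
  then have xyS: "x \<in> S" "y \<in> S" "a \<in> S"
    using a idem_in_S by blast+
  define w where "w = m (m x t) y"
  obtain s' where s': "s' \<in> S1" "nle S m w s'" "s' \<in> S"
    using bound x y t S1(2) unfolding w_def by blast
  have pE: "p \<in> E"
    unfolding p(1) using conj_idem[OF idem_mult_closed[OF xy(2) a] t(1)] xy(1) by simp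
  have pw: "p = m w (m a (star t))" and wS: "w \<in> S"
    unfolding p w_def using xyS t by (simp_all add: mult_assoc)
  then have "w \<noteq> z"
    using p(2) xyS t(1) by auto
  then have s'g: "s' \<noteq> z" "\<phi> s' = g"
    using nle_degree[OF s'(2) wS s'(3)] degree_idem_sandwich[OF xy t(1)] t(2)
    unfolding w_def by simp_all
  define k where "k = m s' (star s')"
  have "star s' = sinv S1 m s'"
    using sinv_subsemigroup[OF S1(1) inverse_semigroup S1(2) s'(1)] by simp
  then have e: "m x k \<in> Ekg S1 m z \<phi> g" and kE: "k \<in> E"
    unfolding k_def using I1.idem_mult_range_in_Ekg[of x s' \<phi> g, OF x s'(1) s'g] mult_star_idem[OF s'(3)] by simp_all
  have "sle m p k"
    using idem_below_range[OF wS s'(2,3) _ pE[unfolded pw]] xyS(3) t(1) pw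
    unfolding k_def by simp
  moreover have "sle m p x"
    using p(1) E.meet_sle1[OF xy(1)] conj_idem[OF idem_mult_closed[OF xy(2) a] t(1)] by simp
  ultimately have "sle m p (m x k)"
    using E.sle_meetI[OF xy(1) kE pE] by blast
  then show ?thesis
    using e by blast
qed

lemma exists_Tc_ideal_above:
  assumes S1: "inverse_semigroup_zero S1 m z" "cover_sub S1 S m z"
    and bound: "\<forall>x\<in>idem S1 m. \<forall>y\<in>idem S1 m. \<forall>s\<in>S. \<exists>s'\<in>S1. nle S m (m (m x s) y) s'"
    and x: "x \<in> idem S1 m" and y: "y \<in> idem S1 m" and a: "a \<in> E" and t: "t \<in> S" "\<phi> t = g"
  shows "\<exists>Z\<in>TcE S1 m z \<phi> g. E.V (m x (m t (m (m y a) (star t)))) \<subseteq> iota S1 S m z Z"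
proof (cases "m x (m t (m (m y a) (star t))) = z")
  case True
  have "{} \<in> TcE S1 m z \<phi> g"
    unfolding TcE_def by (rule empty_in_ideal_gen)
  then show ?thesis
    using True E.V_zero by auto
next
  case False
  have S12: "S1 \<subseteq> S"
    using S1(2) unfolding cover_sub_def inverse_subsemigroup_def by blast
  obtain e where e: "e \<in> Ekg S1 m z \<phi> g" "sle m (m x (m t (m (m y a) (star t)))) e"
    using idem_below_Ekg_subsemigroup[OF S1(1) S12 bound x y a t refl False] by blast
  have eE: "e \<in> idem S1 m" "e \<in> E"
    using e(1) S12 unfolding Ekg_def idem_def by auto
  have "x \<in> E" "y \<in> E"
    using x y S12 unfolding idem_def by auto
  then have "m x (m t (m (m y a) (star t))) \<in> E"
    using conj_idem[OF idem_mult_closed[OF _ a] t(1)] by simp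
  then have "E.V (m x (m t (m (m y a) (star t)))) \<subseteq> iota S1 S m z (Vset (idem S1 m) m z e)"
    using iota_V_idem[OF S1(1) inverse_semigroup S1(2) eE(1)] E.V_mono[OF _ eE(2) e(2)] by simp
  moreover have "Vset (idem S1 m) m z e \<in> TcE S1 m z \<phi> g"
    unfolding TcE_def using e(1) by (intro generator_in_ideal_gen) blast
  ultimately show ?thesis
    by blast
qed

end

theorem theorem5p7:
  fixes S1 S2 :: "'a set" and m :: "'a \<Rightarrow> 'a \<Rightarrow> 'a" and z :: 'a
    and \<phi> :: "'a \<Rightarrow> 'g::group_add"
  assumes "strongly_E_unitary S2 m z \<phi>"
    and "strongly_E_unitary S1 m z \<phi>"
    and "cover_sub S1 S2 m z"
    and "\<forall>x\<in>idem S1 m. \<forall>y\<in>idem S1 m. \<forall>s\<in>S2. \<exists>s'\<in>S1. nle S2 m (m (m x s) y) s'"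
  shows "\<forall>g. \<forall>x\<in>idem S1 m. \<forall>y\<in>idem S1 m. \<forall>a\<in>Ekg S2 m z \<phi> (-g).
           \<exists>Z\<in>TcE S1 m z \<phi> g.
             Vset (idem S2 m) m z x \<inter>
               phit S2 m z \<phi> g (Vset (idem S2 m) m z y \<inter> Vset (idem S2 m) m z a)
             \<subseteq> iota S1 S2 m z Z"
proof (intro allI ballI)
  fix g x y a
  assume x: "x \<in> idem S1 m" and y: "y \<in> idem S1 m" and a: "a \<in> Ekg S2 m z \<phi> (-g)"
  interpret S2: graded_inv_semigroup0 S2 m z \<phi>
    using assms(1) unfolding strongly_E_unitary_def
    by (intro graded_inv_semigroup0.intro inv_semigroup0.intro graded_inv_semigroup0_axioms.intro) blast+
  have S1: "inverse_semigroup_zero S1 m z" "idem S1 m \<subseteq> idem S2 m"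
    using assms(2,3) unfolding strongly_E_unitary_def cover_sub_def inverse_subsemigroup_def idem_def
    by blast+
  obtain t where t: "t \<in> S2" "t \<noteq> z" "\<phi> t = g" and
    "S2.E.V x \<inter> phit S2 m z \<phi> g (S2.E.V y \<inter> S2.E.V a)
       = S2.E.V (m x (m t (m (m y a) (S2.star t))))"
    using S2.V_Int_phit[of x y a g] x y a S1(2) by blast
  then show "\<exists>Z\<in>TcE S1 m z \<phi> g. S2.E.V x \<inter> phit S2 m z \<phi> g (S2.E.V y \<inter> S2.E.V a)
      \<subseteq> iota S1 S2 m z Z"
    using S2.exists_Tc_ideal_above[OF S1(1) assms(3,4) x y S2.Ekg_idem[OF a] t(1,3)] by simp
qed

end
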